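(* Let $(A,E,\alpha,\beta,\gamma)$ be an exact couple that converges conditionally to the colimit, and assume $RE^\infty_s=0$ for all $s$. Then the associated spectral sequence converges weakly to $A_\infty=\operatorname{colim}_sA_s$ with the filtration $F_sA_\infty=\operatorname{im}(\iota_s\colon A_s\to A_\infty)$, and this filtration is complete. Moreover $F_{-\infty}A_\infty\cong W$.
   Context: Work in the abelian category $\mathcal{A}$ of $\mathbb{Z}$-graded $R$-modules ($R$ a ring). An exact couple $(A,E,\alpha,\beta,\gamma)$ consists of objects $A_s,E_s$ ($s\in\mathbb{Z}$) and morphisms $\alpha_s\colon A_{s-1}\to A_s$, $\beta_s\colon A_s\to E_s$, $\gamma_s\colon E_s\to A_{s-1}$ such that $A_{s-1}\xrightarrow{\alpha}A_s\xrightarrow{\beta}E_s\xrightarrow{\gamma}A_{s-1}$ is exact at each vertex, for all $s$ (internal degree of $\alpha$ is $0$; those of $\beta,\gamma$ are $0,-1$ or $-1,0$). Its spectral sequence: $Z^r_s=\gamma^{-1}\operatorname{im}(\alpha^{r-1}\colon A_{s-r}\to A_{s-1})$, $B^r_s=\beta\ker(\alpha^{r-1}\colon A_s\to A_{s+r-1})$, $E^r_s=Z^r_s/B^r_s$, $d^r_s[x]=[\beta(y)]$ where $\gamma(x)=\alpha^{r-1}(y)$. Set $Z^\infty_s=\lim_rZ^r_s=\bigcap_rZ^r_s$, $B^\infty_s=\operatorname{colim}_rB^r_s=\bigcup_rB^r_s$, $E^\infty_s=Z^\infty_s/B^\infty_s$, $RE^\infty_s=\operatorname{Rlim}_rZ^r_s$,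 where $\operatorname{Rlim}=\lim^1$. $A_\infty=\operatorname{colim}_sA_s$ with structure maps $\iota_s$, $A_{-\infty}=\lim_sA_s$, $RA_{-\infty}=\operatorname{Rlim}_sA_s$. The exact couple converges conditionally to the colimit if $A_{-\infty}=0$ and $RA_{-\infty}=0$. A filtration of $G$ is a chain of subobjects $\cdots\subset F_{s-1}G\subset F_sG\subset\cdots\subset G$; $F_\infty G=\operatorname{colim}_sF_sG$, $F_{-\infty}G=\lim_sF_sG$, $RF_{-\infty}G=\operatorname{Rlim}_sF_sG$. It is exhaustive if $F_\infty G\to G$ is an isomorphism, Hausdorff if $F_{-\infty}G=0$, complete if $RF_{-\infty}G=0$. A spectral sequence converges weakly to filtered $G$ if the filtration is exhaustive and $E^\infty_s\cong F_sG/F_{s-1}G$ for all $s$. Boardman's whole-plane obstruction: $\operatorname{im}^rA_s=\operatorname{im}(\alpha^r\colon A_{s-r}\to A_s)$, $K_\infty\operatorname{im}^rA_s=\ker(\iota_s)\cap\operatorname{im}^rA_s$, $W=\operatorname{colim}_s\operatorname{Rlim}_rK_\infty\operatorname{im}^rA_s$. *)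

theory Defs
  imports Main
begin

record ('r, 'a) rmod =
  mcarrier :: "'a set"
  madd :: "'a \<Rightarrow> 'a \<Rightarrow> 'a"
  mzero :: "'a"
  msmult :: "'r \<Rightarrow> 'a \<Rightarrow> 'a"

definition is_mod :: "('r::ring_1, 'a) rmod \<Rightarrow> bool" where
  "is_mod M \<longleftrightarrow>
     mzero M \<in> mcarrier M
   \<and> (\<forall>x\<in>mcarrier M. \<forall>y\<in>mcarrier M. madd M x y \<in> mcarrier M)
   \<and> (\<forall>r. \<forall>x\<in>mcarrier M. msmult M r x \<in> mcarrier M)
   \<and> (\<forall>x\<in>mcarrier M. \<forall>y\<in>mcarrier M. \<forall>z\<in>mcarrier M.
        madd M (madd M x y) z = madd M x (madd M y z))
   \<and> (\<forall>x\<in>mcarrier M. \<forall>y\<in>mcarrier M. madd M x y = madd M y x)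
   \<and> (\<forall>x\<in>mcarrier M. madd M (mzero M) x = x)
   \<and> (\<forall>x\<in>mcarrier M. \<exists>y\<in>mcarrier M. madd M x y = mzero M)
   \<and> (\<forall>r. \<forall>x\<in>mcarrier M. \<forall>y\<in>mcarrier M.
        msmult M r (madd M x y) = madd M (msmult M r x) (msmult M r y))
   \<and> (\<forall>r q. \<forall>x\<in>mcarrier M. msmult M (r + q) x = madd M (msmult M r x) (msmult M q x))
   \<and> (\<forall>r q. \<forall>x\<in>mcarrier M. msmult M (r * q) x = msmult M r (msmult M q x))
   \<and> (\<forall>x\<in>mcarrier M. msmult M 1 x = x)"

definition mdiff :: "('r::ring_1, 'a) rmod \<Rightarrow> 'a \<Rightarrow> 'a \<Rightarrow> 'a" where
  "mdiff M x y = madd M x (msmult M (-1) y)"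

definition hom :: "('r, 'a) rmod \<Rightarrow> ('r, 'b) rmod \<Rightarrow> ('a \<Rightarrow> 'b) \<Rightarrow> bool" where
  "hom M N f \<longleftrightarrow>
     (\<forall>x\<in>mcarrier M. f x \<in> mcarrier N)
   \<and> (\<forall>x\<in>mcarrier M. \<forall>y\<in>mcarrier M. f (madd M x y) = madd N (f x) (f y))
   \<and> (\<forall>r. \<forall>x\<in>mcarrier M. f (msmult M r x) = msmult N r (f x))"

definition iso :: "('r, 'a) rmod \<Rightarrow> ('r, 'b) rmod \<Rightarrow> bool" where
  "iso M N \<longleftrightarrow> (\<exists>f. hom M N f \<and> bij_betw f (mcarrier M) (mcarrier N))"

definition trivial_mod :: "('r, 'a) rmod \<Rightarrow> bool" where
  "trivial_mod M \<longleftrightarrow> mcarrier M = {mzero M}"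

definition kerm :: "('r, 'a) rmod \<Rightarrow> ('r, 'b) rmod \<Rightarrow> ('a \<Rightarrow> 'b) \<Rightarrow> 'a set" where
  "kerm M N f = {x \<in> mcarrier M. f x = mzero N}"

definition sub :: "('r, 'a) rmod \<Rightarrow> 'a set \<Rightarrow> ('r, 'a) rmod" where
  "sub M S = M\<lparr>mcarrier := S\<rparr>"

definition coset :: "('r, 'a) rmod \<Rightarrow> 'a set \<Rightarrow> 'a \<Rightarrow> 'a set" where
  "coset M N x = {madd M x n | n. n \<in> N}"

definition rep :: "'a set \<Rightarrow> 'a" where
  "rep X = (SOME x. x \<in> X)"

definition quot :: "('r, 'a) rmod \<Rightarrow> 'a set \<Rightarrow> ('r, 'a set) rmod" where
  "quot M N = \<lparr> mcarrier = coset M N ` mcarrier M,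
                madd = (\<lambda>X Y. coset M N (madd M (rep X) (rep Y))),
                mzero = coset M N (mzero M),
                msmult = (\<lambda>r X. coset M N (msmult M r (rep X))) \<rparr>"

text \<open>Towers indexed by nat: X n with maps f n : X (Suc n) \<rightarrow> X n.\<close>
definition prodn :: "(nat \<Rightarrow> ('r, 'a) rmod) \<Rightarrow> ('r, nat \<Rightarrow> 'a) rmod" where
  "prodn X = \<lparr> mcarrier = {x. \<forall>n. x n \<in> mcarrier (X n)},
               madd = (\<lambda>x y n. madd (X n) (x n) (y n)),
               mzero = (\<lambda>n. mzero (X n)),
               msmult = (\<lambda>r x n. msmult (X n) r (x n)) \<rparr>"

definition dn :: "(nat \<Rightarrow> ('r::ring_1, 'a) rmod) \<Rightarrow> (nat \<Rightarrow> 'a \<Rightarrow> 'a) \<Rightarrow> (nat \<Rightarrow> 'a) set" where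
  "dn X f = (\<lambda>x. \<lambda>n. mdiff (X n) (x n) (f n (x (Suc n)))) ` mcarrier (prodn X)"

definition Rlim_nat :: "(nat \<Rightarrow> ('r::ring_1, 'a) rmod) \<Rightarrow> (nat \<Rightarrow> 'a \<Rightarrow> 'a)
    \<Rightarrow> ('r, (nat \<Rightarrow> 'a) set) rmod" where
  "Rlim_nat X f = quot (prodn X) (dn X f)"

definition Rlim_nat_map :: "(nat \<Rightarrow> ('r::ring_1, 'b) rmod) \<Rightarrow> (nat \<Rightarrow> 'b \<Rightarrow> 'b)
    \<Rightarrow> ((nat \<Rightarrow> 'a) \<Rightarrow> (nat \<Rightarrow> 'b)) \<Rightarrow> (nat \<Rightarrow> 'a) set \<Rightarrow> (nat \<Rightarrow> 'b) set" where
  "Rlim_nat_map Y f g X = coset (prodn Y) (dn Y f) (g (rep X))"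

text \<open>Towers indexed by int, limit taken as s \<rightarrow> -\<infinity>: X s with maps f s : X (s-1) \<rightarrow> X s.\<close>
definition prodz :: "(int \<Rightarrow> ('r, 'a) rmod) \<Rightarrow> ('r, int \<Rightarrow> 'a) rmod" where
  "prodz X = \<lparr> mcarrier = {x. \<forall>s. x s \<in> mcarrier (X s)},
               madd = (\<lambda>x y s. madd (X s) (x s) (y s)),
               mzero = (\<lambda>s. mzero (X s)),
               msmult = (\<lambda>r x s. msmult (X s) r (x s)) \<rparr>"

definition lim_int :: "(int \<Rightarrow> ('r, 'a) rmod) \<Rightarrow> (int \<Rightarrow> 'a \<Rightarrow> 'a) \<Rightarrow> ('r, int \<Rightarrow> 'a) rmod" where
  "lim_int X f = sub (prodz X) {x \<in> mcarrier (prodz X). \<forall>s. f s (x (s - 1)) = x s}"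

definition Rlim_int :: "(int \<Rightarrow> ('r::ring_1, 'a) rmod) \<Rightarrow> (int \<Rightarrow> 'a \<Rightarrow> 'a)
    \<Rightarrow> ('r, (int \<Rightarrow> 'a) set) rmod" where
  "Rlim_int X f = quot (prodz X)
      ((\<lambda>x. \<lambda>s. mdiff (X s) (x s) (f s (x (s - 1)))) ` mcarrier (prodz X))"

primrec fpow :: "(int \<Rightarrow> 'a \<Rightarrow> 'a) \<Rightarrow> nat \<Rightarrow> int \<Rightarrow> 'a \<Rightarrow> 'a" where
  "fpow f 0 s = id"
| "fpow f (Suc k) s = f s \<circ> fpow f k (s - 1)"
text \<open>fpow f k s is the composite X (s - k) \<rightarrow> X s.\<close>

definition ccls :: "(int \<Rightarrow> ('r, 'a) rmod) \<Rightarrow> (int \<Rightarrow> 'a \<Rightarrow> 'a) \<Rightarrow> int \<Rightarrow> 'a \<Rightarrow> (int \<times> 'a) set" where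
  "ccls X f s x = {(s', x'). x' \<in> mcarrier (X s') \<and>
      (\<exists>u. u \<ge> s \<and> u \<ge> s' \<and> fpow f (nat (u - s)) u x = fpow f (nat (u - s')) u x')}"

definition colim :: "(int \<Rightarrow> ('r, 'a) rmod) \<Rightarrow> (int \<Rightarrow> 'a \<Rightarrow> 'a) \<Rightarrow> ('r, (int \<times> 'a) set) rmod" where
  "colim X f = \<lparr> mcarrier = {ccls X f s x | s x. x \<in> mcarrier (X s)},
     madd = (\<lambda>P Q. let (s, x) = rep P; (s', x') = rep Q; u = max s s'
                    in ccls X f u (madd (X u) (fpow f (nat (u - s)) u x) (fpow f (nat (u - s')) u x'))),
     mzero = ccls X f 0 (mzero (X 0)),
     msmult = (\<lambda>r P. let (s, x) = rep P in ccls X f s (msmult (X s) r x)) \<rparr>"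

definition cinj :: "(int \<Rightarrow> ('r, 'a) rmod) \<Rightarrow> (int \<Rightarrow> 'a \<Rightarrow> 'a) \<Rightarrow> int \<Rightarrow> 'a \<Rightarrow> (int \<times> 'a) set" where
  "cinj X f s x = ccls X f s x"

text \<open>A graded object is given degreewise: A s t is the internal-degree-t part of A_s.
  alpha s t : A (s-1) t \<rightarrow> A s t (degree 0), beta s t : A s t \<rightarrow> E s (t+db),
  gamma s t : E s t \<rightarrow> A (s-1) (t+dg).\<close>

definition exact_couple ::
  "(int \<Rightarrow> int \<Rightarrow> ('r::ring_1, 'a) rmod) \<Rightarrow> (int \<Rightarrow> int \<Rightarrow> ('r, 'e) rmod)
   \<Rightarrow> (int \<Rightarrow> int \<Rightarrow> 'a \<Rightarrow> 'a) \<Rightarrow> (int \<Rightarrow> int \<Rightarrow> 'a \<Rightarrow> 'e) \<Rightarrow> (int \<Rightarrow> int \<Rightarrow> 'e \<Rightarrow> 'a)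
   \<Rightarrow> int \<Rightarrow> int \<Rightarrow> bool" where
  "exact_couple A E alpha beta gamma db dg \<longleftrightarrow>
     (db, dg) \<in> {(0, -1), (-1, 0)}
   \<and> (\<forall>s t. is_mod (A s t) \<and> is_mod (E s t))
   \<and> (\<forall>s t. hom (A (s - 1) t) (A s t) (alpha s t))
   \<and> (\<forall>s t. hom (A s t) (E s (t + db)) (beta s t))
   \<and> (\<forall>s t. hom (E s t) (A (s - 1) (t + dg)) (gamma s t))
   \<and> (\<forall>s t. alpha s t ` mcarrier (A (s - 1) t) = kerm (A s t) (E s (t + db)) (beta s t))
   \<and> (\<forall>s t. beta s t ` mcarrier (A s t)
              = kerm (E s (t + db)) (A (s - 1) (t + db + dg)) (gamma s (t + db)))
   \<and> (\<forall>s t. gamma s t ` mcarrier (E s t)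
              = kerm (A (s - 1) (t + dg)) (A s (t + dg)) (alpha s (t + dg)))"

abbreviation apow where "apow alpha t k s \<equiv> fpow (\<lambda>s. alpha s t) k s"

text \<open>Z^r_s in internal degree t (r \<ge> 1).\<close>
definition Zr :: "(int \<Rightarrow> int \<Rightarrow> ('r, 'a) rmod) \<Rightarrow> (int \<Rightarrow> int \<Rightarrow> ('r, 'e) rmod)
   \<Rightarrow> (int \<Rightarrow> int \<Rightarrow> 'a \<Rightarrow> 'a) \<Rightarrow> (int \<Rightarrow> int \<Rightarrow> 'e \<Rightarrow> 'a) \<Rightarrow> int
   \<Rightarrow> nat \<Rightarrow> int \<Rightarrow> int \<Rightarrow> 'e set" where
  "Zr A E alpha gamma dg r s t =
     {x \<in> mcarrier (E s t). gamma s t x \<in>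
        apow alpha (t + dg) (r - 1) (s - 1) ` mcarrier (A (s - int r) (t + dg))}"

text \<open>B^r_s in internal degree t (r \<ge> 1).\<close>
definition Br :: "(int \<Rightarrow> int \<Rightarrow> ('r, 'a) rmod)
   \<Rightarrow> (int \<Rightarrow> int \<Rightarrow> 'a \<Rightarrow> 'a) \<Rightarrow> (int \<Rightarrow> int \<Rightarrow> 'a \<Rightarrow> 'e) \<Rightarrow> int
   \<Rightarrow> nat \<Rightarrow> int \<Rightarrow> int \<Rightarrow> 'e set" where
  "Br A alpha beta db r s t =
     beta s (t - db) ` {y \<in> mcarrier (A s (t - db)).
        apow alpha (t - db) (r - 1) (s + int r - 1) y = mzero (A (s + int r - 1) (t - db))}"

definition Zinf where
  "Zinf A E alpha gamma dg s t = (\<Inter>r\<in>{1..}. Zr A E alpha gamma dg r s t)"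

definition Binf where
  "Binf A alpha beta db s t = (\<Union>r\<in>{1..}. Br A alpha beta db r s t)"

definition Einf where
  "Einf A E alpha beta gamma db dg s t =
     quot (sub (E s t) (Zinf A E alpha gamma dg s t)) (Binf A alpha beta db s t)"

text \<open>RE^\<infinity>_s = Rlim_r Z^r_s (tower of inclusions Z^(n+2) \<subseteq> Z^(n+1), n \<ge> 0).\<close>
definition REinf where
  "REinf A E alpha gamma dg s t =
     Rlim_nat (\<lambda>n. sub (E s t) (Zr A E alpha gamma dg (n + 1) s t)) (\<lambda>n. id)"

definition Ainf where "Ainf A alpha t = colim (\<lambda>s. A s t) (\<lambda>s. alpha s t)"
definition iota where "iota A alpha s t = cinj (\<lambda>s. A s t) (\<lambda>s. alpha s t) s"
definition Ffilt where "Ffilt A alpha s t = iota A alpha s t ` mcarrier (A s t)"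

definition Kim where
  "Kim A alpha s r t = kerm (A s t) (Ainf A alpha t) (iota A alpha s t)
                       \<inter> apow alpha t r s ` mcarrier (A (s - int r) t)"

definition Wtower where
  "Wtower A alpha s t = Rlim_nat (\<lambda>r. sub (A s t) (Kim A alpha s r t)) (\<lambda>r. id)"

text \<open>W = colim_s Rlim_r K_\<infinity> im^r A_s, with transition maps induced by alpha.\<close>
definition Wobj where
  "Wobj A alpha t = colim (\<lambda>s. Wtower A alpha s t)
     (\<lambda>s. Rlim_nat_map (\<lambda>r. sub (A s t) (Kim A alpha s r t)) (\<lambda>r. id)
                       (\<lambda>x r. alpha s t (x r)))"

end

theory Submission
  imports Defs
begin

text \<open>
  Write \<open>im\<^sup>\<infinity> A\<^sub>s = \<Inter>\<^sub>r im(\<alpha>\<^sup>r)\<close>. The key fact is \<open>im\<^sup>\<infinity> A\<^sub>s = 0\<close>: as \<open>RE\<^sup>\<infinity> = 0\<close>, every element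
  of \<open>im\<^sup>\<infinity> A\<^sub>s\<close> is the \<open>\<alpha>\<close>-image of an element of \<open>im\<^sup>\<infinity> A\<^sub>s\<^sub>-\<^sub>1\<close>, so it is a component of an
  element of \<open>lim A = 0\<close>. Hence \<open>Z\<^sup>\<infinity>\<^sub>s = \<gamma>\<^sup>-\<^sup>1(im\<^sup>\<infinity>) = ker \<gamma> = \<beta>(A\<^sub>s)\<close>, while \<open>B\<^sup>\<infinity>\<^sub>s = \<beta>(ker \<iota>\<^sub>s)\<close> and
  \<open>F\<^sub>s\<^sub>-\<^sub>1 = \<iota>\<^sub>s(ker \<beta>\<^sub>s)\<close>; both \<open>E\<^sup>\<infinity>\<^sub>s\<close> and \<open>F\<^sub>s/F\<^sub>s\<^sub>-\<^sub>1\<close> are then \<open>A\<^sub>s/(ker \<beta>\<^sub>s + ker \<iota>\<^sub>s)\<close>.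
  Completeness holds because \<open>Rlim A = 0\<close> maps onto \<open>Rlim F\<close>. Finally, an element of
  \<open>lim F = F\<^sub>-\<^sub>\<infinity>\<close> lifts to \<open>im\<^sup>r A\<^sub>s\<close> for every \<open>r\<close>; the successive differences of the lifts lie in
  \<open>K\<^sub>\<infinity> im\<^sup>r A\<^sub>s\<close> and give a well-defined class in \<open>W\<close>. This map is injective because
  \<open>im\<^sup>\<infinity> A\<^sub>s = 0\<close> and surjective because \<open>Rlim A = 0\<close>.
\<close>

section \<open>Modules and homomorphisms\<close>

definition mneg :: "('r::ring_1, 'a) rmod \<Rightarrow> 'a \<Rightarrow> 'a" where
  "mneg M x = msmult M (-1) x"

definition submodule :: "('r::ring_1, 'a) rmod \<Rightarrow> 'a set \<Rightarrow> bool" where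
  "submodule M N \<longleftrightarrow> N \<subseteq> mcarrier M \<and> mzero M \<in> N
     \<and> (\<forall>x\<in>N. \<forall>y\<in>N. madd M x y \<in> N) \<and> (\<forall>r. \<forall>x\<in>N. msmult M r x \<in> N)"

context fixes M :: "('r::ring_1, 'a) rmod" assumes m: "is_mod M"
begin

lemma mzero_closed[simp]: "mzero M \<in> mcarrier M" using m unfolding is_mod_def by auto
lemma madd_closed[simp]: "x \<in> mcarrier M \<Longrightarrow> y \<in> mcarrier M \<Longrightarrow> madd M x y \<in> mcarrier M"
  using m unfolding is_mod_def by auto
lemma msmult_closed[simp]: "x \<in> mcarrier M \<Longrightarrow> msmult M r x \<in> mcarrier M"
  using m unfolding is_mod_def by auto
lemma mneg_closed[simp]: "x \<in> mcarrier M \<Longrightarrow> mneg M x \<in> mcarrier M"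
  unfolding mneg_def by simp
lemma mdiff_closed[simp]: "x \<in> mcarrier M \<Longrightarrow> y \<in> mcarrier M \<Longrightarrow> mdiff M x y \<in> mcarrier M"
  unfolding mdiff_def by simp
lemma madd_assoc: "x \<in> mcarrier M \<Longrightarrow> y \<in> mcarrier M \<Longrightarrow> z \<in> mcarrier M \<Longrightarrow>
   madd M (madd M x y) z = madd M x (madd M y z)"
  using m unfolding is_mod_def by auto
lemma madd_comm: "x \<in> mcarrier M \<Longrightarrow> y \<in> mcarrier M \<Longrightarrow> madd M x y = madd M y x"
  using m unfolding is_mod_def by auto
lemma madd_left_commute: "x \<in> mcarrier M \<Longrightarrow> y \<in> mcarrier M \<Longrightarrow> z \<in> mcarrier M \<Longrightarrow>
   madd M x (madd M y z) = madd M y (madd M x z)"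
  by (metis madd_assoc madd_comm)
lemma madd_zero_left[simp]: "x \<in> mcarrier M \<Longrightarrow> madd M (mzero M) x = x"
  using m unfolding is_mod_def by auto
lemma madd_zero_right[simp]: "x \<in> mcarrier M \<Longrightarrow> madd M x (mzero M) = x"
  using madd_comm madd_zero_left by simp
lemma msmult_madd_distrib: "x \<in> mcarrier M \<Longrightarrow> y \<in> mcarrier M \<Longrightarrow>
   msmult M r (madd M x y) = madd M (msmult M r x) (msmult M r y)"
  using m unfolding is_mod_def by auto
lemma msmult_add_distrib: "x \<in> mcarrier M \<Longrightarrow> msmult M (r + q) x = madd M (msmult M r x) (msmult M q x)"
  using m unfolding is_mod_def by auto
lemma msmult_msmult: "x \<in> mcarrier M \<Longrightarrow> msmult M (r * q) x = msmult M r (msmult M q x)"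
  using m unfolding is_mod_def by auto
lemma msmult_one[simp]: "x \<in> mcarrier M \<Longrightarrow> msmult M 1 x = x"
  using m unfolding is_mod_def by auto
lemma madd_inverse_ex: "x \<in> mcarrier M \<Longrightarrow> \<exists>y\<in>mcarrier M. madd M x y = mzero M"
  using m unfolding is_mod_def by blast

lemma madd_left_cancel: assumes "x \<in> mcarrier M" "y \<in> mcarrier M" "z \<in> mcarrier M"
  and "madd M x y = madd M x z" shows "y = z"
proof -
  obtain w where w: "w \<in> mcarrier M" "madd M x w = mzero M" using madd_inverse_ex assms(1) by blast
  have "madd M (madd M w x) y = madd M (madd M w x) z"
    using assms w by (simp add: madd_assoc)
  moreover have "madd M w x = mzero M" using w assms madd_comm by simp
  ultimately show ?thesis using assms by simp
qed

lemma msmult_zero_scalar[simp]: assumes "x \<in> mcarrier M" shows "msmult M 0 x = mzero M"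
proof -
  have "madd M (msmult M 0 x) (msmult M 0 x) = madd M (msmult M 0 x) (mzero M)"
    using msmult_add_distrib[of x 0 0] assms by simp
  thus ?thesis using madd_left_cancel assms by (metis mzero_closed msmult_closed)
qed

lemma madd_mneg[simp]: "x \<in> mcarrier M \<Longrightarrow> madd M x (mneg M x) = mzero M"
  unfolding mneg_def using msmult_add_distrib[of x 1 "-1"] by simp
lemma mneg_madd[simp]: "x \<in> mcarrier M \<Longrightarrow> madd M (mneg M x) x = mzero M"
  using madd_comm by simp

lemma msmult_mzero[simp]: "msmult M r (mzero M) = mzero M"
proof -
  have "madd M (msmult M r (mzero M)) (msmult M r (mzero M)) = madd M (msmult M r (mzero M)) (mzero M)"
    using msmult_madd_distrib[of "mzero M" "mzero M" r] by simp
  thus ?thesis using madd_left_cancel by (metis mzero_closed msmult_closed)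
qed

lemma madd_mneg_cancel[simp]: "x \<in> mcarrier M \<Longrightarrow> y \<in> mcarrier M \<Longrightarrow> madd M x (madd M (mneg M x) y) = y"
  by (simp flip: madd_assoc)
lemma mneg_madd_cancel[simp]: "x \<in> mcarrier M \<Longrightarrow> y \<in> mcarrier M \<Longrightarrow> madd M (mneg M x) (madd M x y) = y"
  by (simp flip: madd_assoc)

lemma mneg_unique: assumes "x \<in> mcarrier M" "y \<in> mcarrier M" "madd M x y = mzero M"
  shows "y = mneg M x"
  using madd_left_cancel[of x y "mneg M x"] assms by simp

lemma mneg_mneg[simp]: "x \<in> mcarrier M \<Longrightarrow> mneg M (mneg M x) = x"
  using mneg_unique[of "mneg M x" x] by simp
lemma mneg_mzero[simp]: "mneg M (mzero M) = mzero M"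
  unfolding mneg_def by simp
lemma mneg_madd_distrib: "x \<in> mcarrier M \<Longrightarrow> y \<in> mcarrier M \<Longrightarrow>
   mneg M (madd M x y) = madd M (mneg M x) (mneg M y)"
  unfolding mneg_def by (simp add: msmult_madd_distrib)
lemma mneg_msmult: "x \<in> mcarrier M \<Longrightarrow> mneg M (msmult M r x) = msmult M r (mneg M x)"
  unfolding mneg_def by (simp flip: msmult_msmult)

lemma mdiff_conv_madd: "mdiff M x y = madd M x (mneg M y)" unfolding mdiff_def mneg_def ..

lemma mdiff_eq_mzero_iff: "x \<in> mcarrier M \<Longrightarrow> y \<in> mcarrier M \<Longrightarrow> mdiff M x y = mzero M \<longleftrightarrow> x = y"
proof
  assume "x \<in> mcarrier M" "y \<in> mcarrier M" "mdiff M x y = mzero M"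
  thus "x = y" unfolding mdiff_conv_madd using mneg_unique[of "mneg M y" x] madd_comm by simp
qed (simp add: mdiff_conv_madd)

lemma mdiff_self[simp]: "x \<in> mcarrier M \<Longrightarrow> mdiff M x x = mzero M"
  by (simp add: mdiff_conv_madd)
lemma mdiff_mzero[simp]: "x \<in> mcarrier M \<Longrightarrow> mdiff M x (mzero M) = x"
  by (simp add: mdiff_conv_madd)

lemma eq_madd_iff_mdiff: "x \<in> mcarrier M \<Longrightarrow> y \<in> mcarrier M \<Longrightarrow> z \<in> mcarrier M \<Longrightarrow>
  x = madd M y z \<longleftrightarrow> mdiff M x y = z"
  unfolding mdiff_conv_madd by (metis madd_comm madd_mneg_cancel mneg_madd_cancel mneg_closed)

lemma mdiff_madd_distrib: assumes "a \<in> mcarrier M" "b \<in> mcarrier M" "c \<in> mcarrier M" "d \<in> mcarrier M"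
  shows "mdiff M (madd M a b) (madd M c d) = madd M (mdiff M a c) (mdiff M b d)"
proof -
  have "mdiff M (madd M a b) (madd M c d) = madd M (madd M a b) (madd M (mneg M c) (mneg M d))"
    using assms by (simp add: mdiff_conv_madd mneg_madd_distrib)
  also have "\<dots> = madd M a (madd M b (madd M (mneg M c) (mneg M d)))"
    using assms by (simp add: madd_assoc)
  also have "\<dots> = madd M a (madd M (mneg M c) (madd M b (mneg M d)))"
    using assms madd_left_commute[of b "mneg M c" "mneg M d"] by simp
  also have "\<dots> = madd M (mdiff M a c) (mdiff M b d)"
    using assms by (simp add: madd_assoc mdiff_conv_madd)
  finally show ?thesis .
qed

lemma mneg_mdiff: "x \<in> mcarrier M \<Longrightarrow> y \<in> mcarrier M \<Longrightarrow> mneg M (mdiff M x y) = mdiff M y x"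
  using madd_comm[of "mneg M x" y] by (simp add: mdiff_conv_madd mneg_madd_distrib)

lemma mdiff_mdiff_distrib: assumes "a \<in> mcarrier M" "b \<in> mcarrier M" "c \<in> mcarrier M" "d \<in> mcarrier M"
  shows "mdiff M (mdiff M a b) (mdiff M c d) = mdiff M (mdiff M a c) (mdiff M b d)"
proof -
  have "mdiff M (mdiff M a b) (mdiff M c d) = mdiff M (madd M a (mneg M b)) (madd M c (mneg M d))"
    by (simp add: mdiff_conv_madd)
  also have "\<dots> = madd M (mdiff M a c) (mdiff M (mneg M b) (mneg M d))"
    using assms by (simp add: mdiff_madd_distrib)
  also have "mdiff M (mneg M b) (mneg M d) = mneg M (mdiff M b d)"
    using assms by (simp add: mdiff_conv_madd mneg_madd_distrib)
  finally show ?thesis using assms by (simp add: mdiff_conv_madd[of "mdiff M a c"])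
qed

lemma mdiff_msmult_distrib: assumes "a \<in> mcarrier M" "c \<in> mcarrier M"
  shows "mdiff M (msmult M r a) (msmult M r c) = msmult M r (mdiff M a c)"
  using assms by (simp add: mdiff_conv_madd msmult_madd_distrib mneg_msmult)

end

lemma sub_simps[simp]: "mcarrier (sub M S) = S" "madd (sub M S) = madd M"
  "mzero (sub M S) = mzero M" "msmult (sub M S) = msmult M"
  by (simp_all add: sub_def)

lemma mdiff_sub[simp]: "mdiff (sub M S) = mdiff M" unfolding mdiff_def by (simp add: fun_eq_iff)

lemma is_mod_sub: assumes m: "is_mod M" and s: "submodule M S" shows "is_mod (sub M S)"
proof -
  have sc: "\<And>x. x \<in> S \<Longrightarrow> x \<in> mcarrier M" using s unfolding submodule_def by blast
  have neg: "\<And>x. x \<in> S \<Longrightarrow> mneg M x \<in> S" using s unfolding submodule_def mneg_def by blast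
  show ?thesis unfolding is_mod_def sub_simps
    using s m sc neg
    apply (intro conjI)
    apply (simp_all add: submodule_def madd_assoc msmult_madd_distrib msmult_add_distrib msmult_msmult)
    apply (meson madd_comm sc)
    apply (metis madd_mneg sc neg)
    done
qed

lemma submodule_carrier: "submodule M M' \<Longrightarrow> x \<in> M' \<Longrightarrow> x \<in> mcarrier M"
  unfolding submodule_def by blast
lemma submodule_zero: "submodule M N \<Longrightarrow> mzero M \<in> N" unfolding submodule_def by blast
lemma submodule_madd: "submodule M N \<Longrightarrow> x \<in> N \<Longrightarrow> y \<in> N \<Longrightarrow> madd M x y \<in> N"
  unfolding submodule_def by blast
lemma submodule_msmult: "submodule M N \<Longrightarrow> x \<in> N \<Longrightarrow> msmult M r x \<in> N"
  unfolding submodule_def by blast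
lemma submodule_mneg: "submodule M N \<Longrightarrow> x \<in> N \<Longrightarrow> mneg M x \<in> N"
  unfolding submodule_def mneg_def by blast
lemma submodule_mdiff: "submodule M N \<Longrightarrow> x \<in> N \<Longrightarrow> y \<in> N \<Longrightarrow> mdiff M x y \<in> N"
  unfolding mdiff_def by (simp add: submodule_madd submodule_msmult)

lemma submodule_Int: "submodule M N \<Longrightarrow> submodule M N' \<Longrightarrow> submodule M (N \<inter> N')"
  unfolding submodule_def by blast

lemma submodule_carrier_self: "is_mod M \<Longrightarrow> submodule M (mcarrier M)"
  unfolding submodule_def by simp

lemma submodule_sub: "submodule M N \<Longrightarrow> N \<subseteq> S \<Longrightarrow> submodule (sub M S) N"
  unfolding submodule_def by auto

context fixes M N f assumes m: "is_mod M" and n: "is_mod N" and h: "hom M N f"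
begin
lemma hom_closed[simp]: "x \<in> mcarrier M \<Longrightarrow> f x \<in> mcarrier N" using h unfolding hom_def by blast
lemma hom_madd: "x \<in> mcarrier M \<Longrightarrow> y \<in> mcarrier M \<Longrightarrow> f (madd M x y) = madd N (f x) (f y)"
  using h unfolding hom_def by blast
lemma hom_msmult: "x \<in> mcarrier M \<Longrightarrow> f (msmult M r x) = msmult N r (f x)"
  using h unfolding hom_def by blast
lemma hom_mzero[simp]: "f (mzero M) = mzero N"
proof -
  have z: "msmult M 0 (mzero M) = mzero M" by (rule msmult_zero_scalar[OF m mzero_closed[OF m]])
  have "f (mzero M) = f (msmult M 0 (mzero M))" using z by simp
  also have "\<dots> = msmult N 0 (f (mzero M))" using hom_msmult m mzero_closed by blast
  also have "\<dots> = mzero N" using msmult_zero_scalar[OF n] hom_closed mzero_closed[OF m] by blast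
  finally show ?thesis .
qed
lemma hom_mdiff: "x \<in> mcarrier M \<Longrightarrow> y \<in> mcarrier M \<Longrightarrow> f (mdiff M x y) = mdiff N (f x) (f y)"
proof -
  assume x: "x \<in> mcarrier M" and y: "y \<in> mcarrier M"
  have "f (madd M x (msmult M (-1) y)) = madd N (f x) (f (msmult M (-1) y))"
    using hom_madd[OF x msmult_closed[OF m y]] .
  also have "f (msmult M (-1) y) = msmult N (-1) (f y)" using hom_msmult[OF y] .
  finally show ?thesis unfolding mdiff_def .
qed
lemma hom_image_submodule: assumes s: "submodule M S" shows "submodule N (f ` S)"
  unfolding submodule_def
proof (intro conjI ballI allI)
  show "f ` S \<subseteq> mcarrier N"
  proof (rule image_subsetI)
    fix a assume "a \<in> S" thus "f a \<in> mcarrier N" by (rule hom_closed[OF submodule_carrier[OF s]])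
  qed
  have "f (mzero M) \<in> f ` S" using submodule_zero[OF s] by (rule imageI)
  thus "mzero N \<in> f ` S" by (simp only: hom_mzero)
  fix x y assume "x \<in> f ` S" "y \<in> f ` S"
  then obtain a b where ab: "a \<in> S" "b \<in> S" "x = f a" "y = f b" by blast
  have "f (madd M a b) \<in> f ` S" using submodule_madd[OF s ab(1,2)] by (rule imageI)
  thus "madd N x y \<in> f ` S" using hom_madd[OF submodule_carrier[OF s ab(1)] submodule_carrier[OF s ab(2)]] ab by simp
next
  fix r x assume "x \<in> f ` S"
  then obtain a where a: "a \<in> S" "x = f a" by blast
  have "f (msmult M r a) \<in> f ` S" using submodule_msmult[OF s a(1)] by (rule imageI)
  thus "msmult N r x \<in> f ` S" using hom_msmult[OF submodule_carrier[OF s a(1)]] a by simp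
qed
lemma kerm_submodule: "submodule M (kerm M N f)"
  unfolding submodule_def kerm_def using m n hom_mzero by (auto simp: hom_madd hom_msmult)
end

lemma hom_vimage_submodule: assumes m: "is_mod M" and n: "is_mod N" and h: "hom M N f" and s: "submodule N S"
  shows "submodule M {x \<in> mcarrier M. f x \<in> S}"
  unfolding submodule_def
proof (intro conjI ballI allI)
  show "mzero M \<in> {x \<in> mcarrier M. f x \<in> S}" using hom_mzero[OF m n h] submodule_zero[OF s] m by simp
  fix x y assume "x \<in> {x \<in> mcarrier M. f x \<in> S}" "y \<in> {x \<in> mcarrier M. f x \<in> S}"
  thus "madd M x y \<in> {x \<in> mcarrier M. f x \<in> S}"
    using hom_madd[OF m n h] submodule_madd[OF s] madd_closed[OF m] by simp
next
  fix r x assume "x \<in> {x \<in> mcarrier M. f x \<in> S}"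
  thus "msmult M r x \<in> {x \<in> mcarrier M. f x \<in> S}"
    using hom_msmult[OF m n h] submodule_msmult[OF s] msmult_closed[OF m] by simp
qed auto

lemma hom_id_sub: "S \<subseteq> S' \<Longrightarrow> hom (sub M S) (sub M S') id"
  unfolding hom_def by auto

lemma hom_comp: "hom L M f \<Longrightarrow> hom M N g \<Longrightarrow> hom L N (g \<circ> f)"
  unfolding hom_def by simp

lemma hom_corestrict: "hom M N f \<Longrightarrow> hom M (sub N (f ` mcarrier M)) f"
  unfolding hom_def by auto

lemma quot_madd_rep: "madd (quot M N) X Y = coset M N (madd M (rep X) (rep Y))"
  unfolding quot_def rmod.select_convs ..
lemma quot_msmult_rep: "msmult (quot M N) r X = coset M N (msmult M r (rep X))"
  unfolding quot_def rmod.select_convs ..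

context fixes M N assumes m: "is_mod M" and s: "submodule M N"
begin
lemma in_coset_iff: "x \<in> mcarrier M \<Longrightarrow> y \<in> coset M N x \<longleftrightarrow> y \<in> mcarrier M \<and> mdiff M y x \<in> N"
proof
  assume x: "x \<in> mcarrier M" and "y \<in> coset M N x"
  then obtain n where n: "n \<in> N" "y = madd M x n" unfolding coset_def by blast
  thus "y \<in> mcarrier M \<and> mdiff M y x \<in> N" using x m submodule_carrier[OF s n(1)]
    by (metis eq_madd_iff_mdiff madd_closed)
next
  assume x: "x \<in> mcarrier M" and "y \<in> mcarrier M \<and> mdiff M y x \<in> N"
  hence "y = madd M x (mdiff M y x)" using eq_madd_iff_mdiff[OF m, of y x "mdiff M y x"] m x by simp
  thus "y \<in> coset M N x" unfolding coset_def using \<open>y \<in> mcarrier M \<and> mdiff M y x \<in> N\<close> by blast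
qed

lemma coset_self: "x \<in> mcarrier M \<Longrightarrow> x \<in> coset M N x"
  using in_coset_iff m s submodule_zero by simp

lemma coset_eq_iff: "x \<in> mcarrier M \<Longrightarrow> y \<in> mcarrier M \<Longrightarrow>
   coset M N x = coset M N y \<longleftrightarrow> mdiff M x y \<in> N"
proof
  assume x: "x \<in> mcarrier M" and y: "y \<in> mcarrier M" and "coset M N x = coset M N y"
  thus "mdiff M x y \<in> N" using coset_self in_coset_iff by blast
next
  assume x: "x \<in> mcarrier M" and y: "y \<in> mcarrier M" and d: "mdiff M x y \<in> N"
  have sub: "coset M N x \<subseteq> coset M N y" if x: "x \<in> mcarrier M" and y: "y \<in> mcarrier M"
    and d: "mdiff M x y \<in> N" for x y
  proof
    fix z assume "z \<in> coset M N x"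
    hence z: "z \<in> mcarrier M" "mdiff M z x \<in> N" using in_coset_iff x by auto
    have "mdiff M z y = madd M (mdiff M z x) (mdiff M x y)"
      using x y z m by (simp add: mdiff_conv_madd madd_assoc)
    hence "mdiff M z y \<in> N" using z d s submodule_madd by metis
    thus "z \<in> coset M N y" using in_coset_iff y z by blast
  qed
  have "mdiff M y x = mneg M (mdiff M x y)" using x y m by (simp add: mneg_mdiff)
  hence "mdiff M y x \<in> N" using d s submodule_mneg by metis
  thus "coset M N x = coset M N y" using sub x y d by blast
qed

lemma rep_coset: assumes "x \<in> mcarrier M"
  shows "rep (coset M N x) \<in> mcarrier M" "mdiff M (rep (coset M N x)) x \<in> N"
    "coset M N (rep (coset M N x)) = coset M N x"
proof -
  have "rep (coset M N x) \<in> coset M N x" unfolding rep_def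
    by (rule someI, rule coset_self[OF assms])
  thus "rep (coset M N x) \<in> mcarrier M" "mdiff M (rep (coset M N x)) x \<in> N"
    using in_coset_iff assms by auto
  thus "coset M N (rep (coset M N x)) = coset M N x" using coset_eq_iff assms by blast
qed

lemma quot_carrier: "mcarrier (quot M N) = coset M N ` mcarrier M"
  unfolding quot_def rmod.select_convs ..
lemma quot_zero: "mzero (quot M N) = coset M N (mzero M)" unfolding quot_def rmod.select_convs ..

lemma quot_madd: assumes x: "x \<in> mcarrier M" and y: "y \<in> mcarrier M"
  shows "madd (quot M N) (coset M N x) (coset M N y) = coset M N (madd M x y)"
proof -
  let ?x = "rep (coset M N x)" and ?y = "rep (coset M N y)"
  have c: "?x \<in> mcarrier M" "?y \<in> mcarrier M" "mdiff M ?x x \<in> N" "mdiff M ?y y \<in> N"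
    using rep_coset x y by auto
  have eq: "mdiff M (madd M ?x ?y) (madd M x y) = madd M (mdiff M ?x x) (mdiff M ?y y)"
    using c x y m by (simp add: mdiff_madd_distrib)
  have "mdiff M (madd M ?x ?y) (madd M x y) \<in> N" unfolding eq by (rule submodule_madd[OF s c(3) c(4)])
  hence e: "coset M N (madd M ?x ?y) = coset M N (madd M x y)"
    using coset_eq_iff[of "madd M ?x ?y" "madd M x y"] c x y m by simp
  show ?thesis unfolding quot_madd_rep using e .
qed

lemma quot_msmult: assumes x: "x \<in> mcarrier M"
  shows "msmult (quot M N) r (coset M N x) = coset M N (msmult M r x)"
proof -
  let ?x = "rep (coset M N x)"
  have c: "?x \<in> mcarrier M" "mdiff M ?x x \<in> N" using rep_coset x by auto
  have eq: "mdiff M (msmult M r ?x) (msmult M r x) = msmult M r (mdiff M ?x x)"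
    using c x m by (simp add: mdiff_msmult_distrib)
  have "mdiff M (msmult M r ?x) (msmult M r x) \<in> N" unfolding eq by (rule submodule_msmult[OF s c(2)])
  hence e: "coset M N (msmult M r ?x) = coset M N (msmult M r x)"
    using coset_eq_iff[of "msmult M r ?x" "msmult M r x"] c x m by simp
  show ?thesis unfolding quot_msmult_rep using e .
qed

lemma quot_trivial_iff: "trivial_mod (quot M N) \<longleftrightarrow> mcarrier M \<subseteq> N"
proof -
  have "trivial_mod (quot M N) \<longleftrightarrow> (\<forall>x \<in> mcarrier M. coset M N x = coset M N (mzero M))"
    unfolding trivial_mod_def quot_carrier quot_zero using mzero_closed[OF m] by blast
  also have "\<dots> \<longleftrightarrow> mcarrier M \<subseteq> N"
    using coset_eq_iff[OF _ mzero_closed[OF m]] mdiff_mzero[OF m] by auto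
  finally show ?thesis .
qed

end

lemma quot_is_mod: assumes m: "is_mod M" and n: "submodule M N" shows "is_mod (quot M N)"
proof -
  have el: "\<And>X. X \<in> mcarrier (quot M N) \<Longrightarrow> \<exists>x. x \<in> mcarrier M \<and> X = coset M N x"
    using quot_carrier[OF m n] by auto
  have inq: "\<And>x. x \<in> mcarrier M \<Longrightarrow> coset M N x \<in> mcarrier (quot M N)"
    using quot_carrier[OF m n] by auto
  note qa = quot_madd[OF m n] and qs = quot_msmult[OF m n] and qz = quot_zero[OF m n]
  show ?thesis unfolding is_mod_def
  proof (intro conjI ballI allI)
    show "mzero (quot M N) \<in> mcarrier (quot M N)" unfolding qz by (rule inq[OF mzero_closed[OF m]])
  next
    fix X Y assume "X \<in> mcarrier (quot M N)" "Y \<in> mcarrier (quot M N)"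
    then obtain x y where x: "x \<in> mcarrier M" "X = coset M N x" and y: "y \<in> mcarrier M" "Y = coset M N y"
      using el by blast
    show "madd (quot M N) X Y \<in> mcarrier (quot M N)" using x y qa inq madd_closed[OF m] by simp
    show "madd (quot M N) X Y = madd (quot M N) Y X" using x y qa madd_comm[OF m] by simp
    show "msmult (quot M N) r (madd (quot M N) X Y) = madd (quot M N) (msmult (quot M N) r X) (msmult (quot M N) r Y)" for r
      using x y qa qs msmult_madd_distrib[OF m] madd_closed[OF m] msmult_closed[OF m] by simp
  next
    fix r X assume "X \<in> mcarrier (quot M N)"
    then obtain x where x: "x \<in> mcarrier M" "X = coset M N x" using el by blast
    show "msmult (quot M N) r X \<in> mcarrier (quot M N)" using x qs inq msmult_closed[OF m] by simp
  next
    fix X Y Z assume "X \<in> mcarrier (quot M N)" "Y \<in> mcarrier (quot M N)" "Z \<in> mcarrier (quot M N)"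
    then obtain x y z where x: "x \<in> mcarrier M" "X = coset M N x" and y: "y \<in> mcarrier M" "Y = coset M N y"
      and z: "z \<in> mcarrier M" "Z = coset M N z"
      using el by metis
    show "madd (quot M N) (madd (quot M N) X Y) Z = madd (quot M N) X (madd (quot M N) Y Z)"
      using x y z qa madd_assoc[OF m] madd_closed[OF m] by simp
  next
    fix X assume "X \<in> mcarrier (quot M N)"
    then obtain x where x: "x \<in> mcarrier M" "X = coset M N x" using el by blast
    show "madd (quot M N) (mzero (quot M N)) X = X"
      using x qa qz mzero_closed[OF m] madd_zero_left[OF m x(1)] by simp
    show "\<exists>Y\<in>mcarrier (quot M N). madd (quot M N) X Y = mzero (quot M N)"
      using x qa qz inq mneg_closed[OF m] madd_mneg[OF m]
        by (intro bexI[of _ "coset M N (mneg M x)"]) auto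
    show "msmult (quot M N) 1 X = X" using x qs msmult_one[OF m x(1)] by simp
    show "msmult (quot M N) (r + q) X = madd (quot M N) (msmult (quot M N) r X) (msmult (quot M N) q X)" for r q
      using x qs qa msmult_add_distrib[OF m] msmult_closed[OF m] by simp
    show "msmult (quot M N) (r * q) X = msmult (quot M N) r (msmult (quot M N) q X)" for r q
      using x qs msmult_msmult[OF m] msmult_closed[OF m] by simp
  qed
qed

lemma coset_rep_induced:
  assumes mM: "is_mod M" and mM': "is_mod M'" and sN: "submodule M N" and sN': "submodule M' N'"
    and hf: "hom M M' f" and fN: "f ` N \<subseteq> N'" and x: "x \<in> mcarrier M"
  shows "coset M' N' (f (rep (coset M N x))) = coset M' N' (f x)"
proof -
  let ?x = "rep (coset M N x)"
  have "?x \<in> mcarrier M" "mdiff M ?x x \<in> N" using rep_coset[OF mM sN x] by auto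
  moreover have "mdiff M' (f ?x) (f x) = f (mdiff M ?x x)" using hom_mdiff[OF mM mM' hf] calculation(1) x
    by simp
  ultimately show ?thesis using coset_eq_iff[OF mM' sN'] hom_closed[OF mM mM' hf] x fN by auto
qed

lemma hom_quot_induced:
  assumes mM: "is_mod M" and mM': "is_mod M'" and sN: "submodule M N" and sN': "submodule M' N'"
    and hf: "hom M M' f" and fN: "f ` N \<subseteq> N'"
  shows "hom (quot M N) (quot M' N') (\<lambda>X. coset M' N' (f (rep X)))"
proof -
  note induced = coset_rep_induced[OF mM mM' sN sN' hf fN]
  show ?thesis
    unfolding hom_def quot_carrier[OF mM sN] quot_carrier[OF mM' sN']
  proof (intro conjI ballI allI; elim imageE)
    fix X x assume "x \<in> mcarrier M" "X = coset M N x"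
    thus "coset M' N' (f (rep X)) \<in> coset M' N' ` mcarrier M'"
      using induced hom_closed[OF mM mM' hf] by simp
  next
    fix X Y x y assume x: "x \<in> mcarrier M" "X = coset M N x" and y: "y \<in> mcarrier M" "Y = coset M N y"
    thus "coset M' N' (f (rep (madd (quot M N) X Y))) =
        madd (quot M' N') (coset M' N' (f (rep X))) (coset M' N' (f (rep Y)))"
      using induced quot_madd[OF mM sN] quot_madd[OF mM' sN'] hom_madd[OF mM mM' hf] hom_closed[OF mM mM' hf]
        madd_closed[OF mM] by simp
  next
    fix r X x assume "x \<in> mcarrier M" "X = coset M N x"
    thus "coset M' N' (f (rep (msmult (quot M N) r X))) = msmult (quot M' N') r (coset M' N' (f (rep X)))"
      using induced quot_msmult[OF mM sN] quot_msmult[OF mM' sN'] hom_msmult[OF mM mM' hf] hom_closed[OF mM mM' hf]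
        msmult_closed[OF mM] by simp
  qed
qed

lemma coset_hom: "is_mod M \<Longrightarrow> submodule M N \<Longrightarrow> hom M (quot M N) (coset M N)"
  unfolding hom_def by (simp add: quot_carrier quot_madd quot_msmult)

lemma iso_of_surj_homs:
  assumes mA: "is_mod A" and mP: "is_mod P" and mQ: "is_mod Q"
    and hp: "hom A P p" and hq: "hom A Q q"
    and sp: "p ` mcarrier A = mcarrier P" and sq: "q ` mcarrier A = mcarrier Q"
    and fibres: "\<And>x y. x \<in> mcarrier A \<Longrightarrow> y \<in> mcarrier A \<Longrightarrow> p x = p y \<longleftrightarrow> q x = q y"
  shows "iso P Q"
proof -
  define phi where "phi X = q (SOME a. a \<in> mcarrier A \<and> p a = X)" for X
  have phi: "phi (p a) = q a" if a: "a \<in> mcarrier A" for a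
  proof -
    have "\<exists>a'. a' \<in> mcarrier A \<and> p a' = p a" using a by blast
    hence "(SOME a'. a' \<in> mcarrier A \<and> p a' = p a) \<in> mcarrier A \<and> p (SOME a'. a' \<in> mcarrier A \<and> p a' = p a) = p a"
      by (rule someI_ex)
    thus ?thesis unfolding phi_def using fibres[OF _ a] by blast
  qed
  have hphi: "hom P Q phi"
    unfolding hom_def
  proof (intro conjI ballI allI)
    fix X Y assume "X \<in> mcarrier P" "Y \<in> mcarrier P"
    then obtain a b where ab: "a \<in> mcarrier A" "b \<in> mcarrier A" "X = p a" "Y = p b" using sp by blast
    show "phi X \<in> mcarrier Q" using phi[OF ab(1)] ab(1,3) sq by auto
    have "madd P X Y = p (madd A a b)" using ab hom_madd[OF mA mP hp] by simp
    thus "phi (madd P X Y) = madd Q (phi X) (phi Y)"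
      using ab phi hom_madd[OF mA mQ hq] madd_closed[OF mA] by simp
  next
    fix r X assume "X \<in> mcarrier P"
    then obtain a where a: "a \<in> mcarrier A" "X = p a" using sp by blast
    have "msmult P r X = p (msmult A r a)" using a hom_msmult[OF mA mP hp] by simp
    thus "phi (msmult P r X) = msmult Q r (phi X)"
      using a phi hom_msmult[OF mA mQ hq] msmult_closed[OF mA] by simp
  qed
  have "inj_on phi (mcarrier P)"
  proof (rule inj_onI)
    fix X Y assume "X \<in> mcarrier P" "Y \<in> mcarrier P" and eq: "phi X = phi Y"
    then obtain a b where "a \<in> mcarrier A" "b \<in> mcarrier A" "X = p a" "Y = p b" using sp by blast
    thus "X = Y" using eq phi fibres by simp
  qed
  moreover have "phi ` mcarrier P = mcarrier Q"
    unfolding sp[symmetric] sq[symmetric] image_image using phi by simp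
  ultimately show ?thesis unfolding iso_def bij_betw_def using hphi by blast
qed

lemma image_kerm_swap:
  assumes mA: "is_mod A" and mE: "is_mod E" and mG: "is_mod G" and hb: "hom A E b" and hi: "hom A G i"
    and x: "x \<in> mcarrier A" and bx: "b x \<in> b ` kerm A G i"
  shows "i x \<in> i ` kerm A E b"
proof -
  obtain k where k: "k \<in> kerm A G i" "b x = b k" using bx by blast
  have kA: "k \<in> mcarrier A" and ik: "i k = mzero G" using k(1) unfolding kerm_def by auto
  have "b (mdiff A x k) = mzero E" using hom_mdiff[OF mA mE hb x kA] k(2) mE hom_closed[OF mA mE hb kA]
    by simp
  hence "mdiff A x k \<in> kerm A E b" unfolding kerm_def using x kA mA by simp
  moreover have "i (mdiff A x k) = i x"
    using hom_mdiff[OF mA mG hi x kA] ik hom_closed[OF mA mG hi x] mG by simp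
  ultimately show ?thesis by (metis image_eqI)
qed

text \<open>For \<open>b: A \<rightarrow> E\<close> and \<open>i: A \<rightarrow> G\<close>, both sides are \<open>A/(ker b + ker i)\<close>.\<close>
lemma iso_image_quot:
  assumes mA: "is_mod A" and mE: "is_mod E" and mG: "is_mod G" and hb: "hom A E b" and hi: "hom A G i"
  shows "iso (quot (sub E (b ` mcarrier A)) (b ` kerm A G i)) (quot (sub G (i ` mcarrier A)) (i ` kerm A E b))"
proof -
  define Z where "Z = b ` mcarrier A"
  define B where "B = b ` kerm A G i"
  define S where "S = i ` mcarrier A"
  define N where "N = i ` kerm A E b"
  have kc: "kerm A G i \<subseteq> mcarrier A" "kerm A E b \<subseteq> mcarrier A" unfolding kerm_def by auto
  have mZ: "is_mod (sub E Z)" unfolding Z_def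
    by (rule is_mod_sub[OF mE hom_image_submodule[OF mA mE hb submodule_carrier_self[OF mA]]])
  have mS: "is_mod (sub G S)" unfolding S_def
    by (rule is_mod_sub[OF mG hom_image_submodule[OF mA mG hi submodule_carrier_self[OF mA]]])
  have sB: "submodule (sub E Z) B" unfolding B_def Z_def using kc
    by (intro submodule_sub[OF hom_image_submodule[OF mA mE hb kerm_submodule[OF mA mG hi]]]) auto
  have sN: "submodule (sub G S) N" unfolding N_def S_def using kc
    by (intro submodule_sub[OF hom_image_submodule[OF mA mG hi kerm_submodule[OF mA mE hb]]]) auto
  have hb': "hom A (sub E Z) b" and hi': "hom A (sub G S) i"
    unfolding Z_def S_def using hom_corestrict hb hi by auto
  have "coset (sub E Z) B (b x) = coset (sub E Z) B (b y) \<longleftrightarrow>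
      coset (sub G S) N (i x) = coset (sub G S) N (i y)" if x: "x \<in> mcarrier A" and y: "y \<in> mcarrier A" for x y
  proof -
    have bz: "b x \<in> mcarrier (sub E Z)" "b y \<in> mcarrier (sub E Z)" unfolding Z_def using x y by auto
    have iz: "i x \<in> mcarrier (sub G S)" "i y \<in> mcarrier (sub G S)" unfolding S_def using x y by auto
    have xy: "mdiff A x y \<in> mcarrier A" using mA x y by simp
    have "coset (sub E Z) B (b x) = coset (sub E Z) B (b y) \<longleftrightarrow> b (mdiff A x y) \<in> B"
      using coset_eq_iff[OF mZ sB bz] hom_mdiff[OF mA mE hb x y] by simp
    also have "\<dots> \<longleftrightarrow> i (mdiff A x y) \<in> N" unfolding B_def N_def
      using image_kerm_swap[OF mA mE mG hb hi xy] image_kerm_swap[OF mA mG mE hi hb xy] by blast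
    also have "\<dots> \<longleftrightarrow> coset (sub G S) N (i x) = coset (sub G S) N (i y)"
      using coset_eq_iff[OF mS sN iz] hom_mdiff[OF mA mG hi x y] by simp
    finally show ?thesis .
  qed
  moreover have "(coset (sub E Z) B \<circ> b) ` mcarrier A = mcarrier (quot (sub E Z) B)"
    using quot_carrier[OF mZ sB] by (simp add: Z_def image_comp)
  moreover have "(coset (sub G S) N \<circ> i) ` mcarrier A = mcarrier (quot (sub G S) N)"
    using quot_carrier[OF mS sN] by (simp add: S_def image_comp)
  ultimately have "iso (quot (sub E Z) B) (quot (sub G S) N)"
    using iso_of_surj_homs[OF mA quot_is_mod[OF mZ sB] quot_is_mod[OF mS sN]
        hom_comp[OF hb' coset_hom[OF mZ sB]] hom_comp[OF hi' coset_hom[OF mS sN]]] by simp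
  thus ?thesis unfolding Z_def B_def S_def N_def .
qed

section \<open>Products, limits and derived limits\<close>

definition prodm :: "('i \<Rightarrow> ('r, 'a) rmod) \<Rightarrow> ('r, 'i \<Rightarrow> 'a) rmod" where
  "prodm X = \<lparr> mcarrier = {x. \<forall>i. x i \<in> mcarrier (X i)},
               madd = (\<lambda>x y i. madd (X i) (x i) (y i)),
               mzero = (\<lambda>i. mzero (X i)),
               msmult = (\<lambda>r x i. msmult (X i) r (x i)) \<rparr>"

lemma prodn_eq_prodm: "prodn = prodm"
  by (simp add: fun_eq_iff prodn_def prodm_def)

lemma prodz_eq_prodm: "prodz = prodm"
  by (simp add: fun_eq_iff prodz_def prodm_def)

lemma prodm_simps[simp]: "mcarrier (prodm X) = {x. \<forall>i. x i \<in> mcarrier (X i)}"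
  "madd (prodm X) x y = (\<lambda>i. madd (X i) (x i) (y i))"
  "mzero (prodm X) = (\<lambda>i. mzero (X i))"
  "msmult (prodm X) r x = (\<lambda>i. msmult (X i) r (x i))"
  by (simp_all add: prodm_def)

lemma prodm_mdiff: "mdiff (prodm X) x y = (\<lambda>i. mdiff (X i) (x i) (y i))"
  unfolding mdiff_def by simp

lemma prodm_is_mod: assumes "\<And>i. is_mod (X i)" shows "is_mod (prodm X)"
proof -
  have inv: "\<And>x. \<forall>i. x i \<in> mcarrier (X i) \<Longrightarrow> \<exists>y. (\<forall>i. y i \<in> mcarrier (X i)) \<and>
     (\<lambda>i. madd (X i) (x i) (y i)) = (\<lambda>i. mzero (X i))"
    by (rule_tac x="\<lambda>i. mneg (X i) (x i)" in exI) (simp add: assms)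
  show ?thesis unfolding is_mod_def prodm_simps using assms inv
    by (simp add: fun_eq_iff madd_assoc msmult_madd_distrib msmult_add_distrib msmult_msmult)
      (meson madd_comm)
qed

text \<open>The cokernel of \<open>x \<mapsto> (x i - f i (x (pred i)))\<^sub>i\<close> is \<open>Rlim\<close>, with \<open>pred = Suc\<close> for
  towers indexed by \<open>nat\<close> and \<open>pred i = i - 1\<close> for sequences indexed by \<open>int\<close>.\<close>
definition coboundaries :: "('i \<Rightarrow> ('r::ring_1, 'a) rmod) \<Rightarrow> ('i \<Rightarrow> 'i) \<Rightarrow> ('i \<Rightarrow> 'a \<Rightarrow> 'a)
    \<Rightarrow> ('i \<Rightarrow> 'a) set" where
  "coboundaries X pred f = (\<lambda>x i. mdiff (X i) (x i) (f i (x (pred i)))) ` mcarrier (prodm X)"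

lemma coboundaries_submodule:
  assumes m: "\<And>i. is_mod (X i)" and h: "\<And>i. hom (X (pred i)) (X i) (f i)"
  shows "submodule (prodm X) (coboundaries X pred f)"
proof -
  let ?d = "\<lambda>x i. mdiff (X i) (x i) (f i (x (pred i)))"
  have closed: "mdiff (X i) (x i) (f i (x (pred i))) \<in> mcarrier (X i)"
    if "\<forall>i. x i \<in> mcarrier (X i)" for x i
    using that hom_closed[OF m m h] m by simp
  have additive: "mdiff (X i) (madd (X i) (x i) (y i)) (f i (madd (X (pred i)) (x (pred i)) (y (pred i)))) =
        madd (X i) (mdiff (X i) (x i) (f i (x (pred i)))) (mdiff (X i) (y i) (f i (y (pred i))))"
    if x: "\<forall>i. x i \<in> mcarrier (X i)" and y: "\<forall>i. y i \<in> mcarrier (X i)" for x y i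
    using hom_madd[OF m m h x[rule_format] y[rule_format]]
      mdiff_madd_distrib[OF m x[rule_format] y[rule_format] hom_closed[OF m m h x[rule_format]]
        hom_closed[OF m m h y[rule_format]]]
    by simp
  have homogeneous: "mdiff (X i) (msmult (X i) r (x i)) (f i (msmult (X (pred i)) r (x (pred i)))) =
        msmult (X i) r (mdiff (X i) (x i) (f i (x (pred i))))"
    if x: "\<forall>i. x i \<in> mcarrier (X i)" for x r i
    using hom_msmult[OF m m h x[rule_format]] mdiff_msmult_distrib[OF m x[rule_format] hom_closed[OF m m h x[rule_format]]]
    by simp
  have "hom (prodm X) (prodm X) ?d"
    unfolding hom_def prodm_simps using closed additive homogeneous by (simp add: fun_eq_iff)
  thus ?thesis unfolding coboundaries_def
    using hom_image_submodule submodule_carrier_self prodm_is_mod m by blast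
qed

lemma dn_eq_coboundaries: "dn X f = coboundaries X Suc f"
  unfolding dn_def coboundaries_def prodn_eq_prodm ..

lemma Rlim_nat_trivial_iff:
  assumes "\<And>n. is_mod (X n)" and "\<And>n. hom (X (Suc n)) (X n) (f n)"
  shows "trivial_mod (Rlim_nat X f) \<longleftrightarrow> mcarrier (prodm X) \<subseteq> coboundaries X Suc f"
  unfolding Rlim_nat_def prodn_eq_prodm dn_eq_coboundaries
  using quot_trivial_iff[OF prodm_is_mod coboundaries_submodule, of X] assms by simp

lemma Rlim_int_trivial_iff:
  assumes "\<And>s. is_mod (X s)" and "\<And>s. hom (X (s - 1)) (X s) (f s)"
  shows "trivial_mod (Rlim_int X f) \<longleftrightarrow> mcarrier (prodm X) \<subseteq> coboundaries X (\<lambda>s. s - 1) f"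
proof -
  have "Rlim_int X f = quot (prodm X) (coboundaries X (\<lambda>s. s - 1) f)"
    unfolding Rlim_int_def prodz_eq_prodm coboundaries_def ..
  thus ?thesis using quot_trivial_iff[OF prodm_is_mod coboundaries_submodule, of X] assms by simp
qed

lemma Rlim_nat_trivialD:
  assumes "\<And>n. is_mod (X n)" and "\<And>n. hom (X (Suc n)) (X n) (f n)"
    and "trivial_mod (Rlim_nat X f)" and "\<And>n. e n \<in> mcarrier (X n)"
  obtains c where "\<And>n. c n \<in> mcarrier (X n)" and "\<And>n. e n = mdiff (X n) (c n) (f n (c (Suc n)))"
proof -
  have "e \<in> coboundaries X Suc f" using assms(3,4) Rlim_nat_trivial_iff[of X f, OF assms(1,2)] by auto
  thus ?thesis using that unfolding coboundaries_def by (auto simp: fun_eq_iff)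
qed

lemma Rlim_int_trivialD:
  assumes "\<And>s. is_mod (X s)" and "\<And>s. hom (X (s - 1)) (X s) (f s)"
    and "trivial_mod (Rlim_int X f)" and "\<And>s. e s \<in> mcarrier (X s)"
  obtains c where "\<And>s. c s \<in> mcarrier (X s)" and "\<And>s. e s = mdiff (X s) (c s) (f s (c (s - 1)))"
proof -
  have "e \<in> coboundaries X (\<lambda>s. s - 1) f" using assms(3,4) Rlim_int_trivial_iff[of X f, OF assms(1,2)]
    by auto
  thus ?thesis using that unfolding coboundaries_def by (auto simp: fun_eq_iff)
qed

lemma Rlim_int_trivial_surj:
  assumes mX: "\<And>s. is_mod (X s)" and hX: "\<And>s. hom (X (s - 1)) (X s) (f s)"
    and mY: "\<And>s. is_mod (Y s)" and hY: "\<And>s. hom (Y (s - 1)) (Y s) (g s)"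
    and hp: "\<And>s. hom (X s) (Y s) (p s)" and surj: "\<And>s. p s ` mcarrier (X s) = mcarrier (Y s)"
    and natural: "\<And>s x. x \<in> mcarrier (X (s - 1)) \<Longrightarrow> p s (f s x) = g s (p (s - 1) x)"
    and triv: "trivial_mod (Rlim_int X f)"
  shows "trivial_mod (Rlim_int Y g)"
  unfolding Rlim_int_trivial_iff[of Y g, OF mY hY]
proof
  fix y assume "y \<in> mcarrier (prodm Y)"
  hence "\<forall>s. \<exists>x. x \<in> mcarrier (X s) \<and> y s = p s x" using surj by (fastforce simp: image_iff)
  then obtain x where x: "\<And>s. x s \<in> mcarrier (X s)" "\<And>s. y s = p s (x s)" by metis
  obtain c where c: "\<And>s. c s \<in> mcarrier (X s)" "\<And>s. x s = mdiff (X s) (c s) (f s (c (s - 1)))"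
    using Rlim_int_trivialD[of X f, OF mX hX triv x(1)] by metis
  have "y = (\<lambda>s. mdiff (Y s) (p s (c s)) (g s (p (s - 1) (c (s - 1)))))"
    using x(2) c hom_mdiff[OF mX mY hp] hom_closed[OF mX mX hX] natural by (simp add: fun_eq_iff)
  moreover have "(\<lambda>s. p s (c s)) \<in> mcarrier (prodm Y)" using c(1) hom_closed[OF mX mY hp] by simp
  ultimately show "y \<in> coboundaries Y (\<lambda>s. s - 1) g"
    unfolding coboundaries_def by (rule image_eqI)
qed

lemma lim_int_trivial_imp_zero:
  assumes "trivial_mod (lim_int X f)"
    and "\<And>s. x s \<in> mcarrier (X s)" and "\<And>s. f s (x (s - 1)) = x s"
  shows "x s = mzero (X s)"
proof -
  have "x \<in> mcarrier (lim_int X f)" unfolding lim_int_def prodz_eq_prodm using assms(2,3) by simp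
  hence "x = mzero (lim_int X f)" using assms(1) unfolding trivial_mod_def by simp
  thus ?thesis unfolding lim_int_def prodz_eq_prodm by simp
qed

lemma int_seq_const: assumes "\<forall>s. x (s - 1) = x (s::int)" shows "x s = x 0"
proof -
  have p: "x (int n) = x 0" for n
  proof (induction n)
    case (Suc n) thus ?case using assms[rule_format, of "int (Suc n)"] by simp
  qed simp
  have q: "x (- int n) = x 0" for n
  proof (induction n)
    case (Suc n)
    have e: "- int (Suc n) = - int n - 1" by simp
    show ?case unfolding e using assms[rule_format, of "- int n"] Suc by simp
  qed simp
  show ?thesis
  proof (cases "s \<ge> 0")
    case True thus ?thesis using p[of "nat s"] by simp
  next
    case False thus ?thesis using q[of "nat (- s)"] by simp
  qed
qed

section \<open>Colimits of sequences\<close>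

lemma fpow_add: "fpow f (j + k) s = fpow f j s \<circ> fpow f k (s - int j)"
proof (induction j arbitrary: s)
  case 0 thus ?case by simp
next
  case (Suc j)
  have "fpow f (Suc j + k) s = f s \<circ> fpow f (j + k) (s - 1)" by simp
  also have "\<dots> = f s \<circ> (fpow f j (s - 1) \<circ> fpow f k (s - 1 - int j))" using Suc by presburger
  also have "s - 1 - int j = s - int (Suc j)" by simp
  finally show ?case by (simp add: comp_assoc)
qed

lemma fpow_Suc_right: "fpow f (Suc k) s = fpow f k s \<circ> f (s - int k)"
  using fpow_add[of f k 1 s] by (simp add: comp_def)

lemma fpow_Suc_right_apply: "fpow f (Suc k) s x = fpow f k s (f (s - int k) x)"
  using fpow_Suc_right[of f k s] by simp

lemma fpow_hom: assumes m: "\<And>s. is_mod (X s)" and h: "\<And>s. hom (X (s - 1)) (X s) (f s)"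
  shows "hom (X (s - int k)) (X s) (fpow f k s)"
proof (induction k arbitrary: s)
  case 0 thus ?case by (simp add: hom_def)
next
  case (Suc k)
  have h1: "hom (X (s - 1 - int k)) (X (s - 1)) (fpow f k (s - 1))" using Suc .
  have e: "s - 1 - int k = s - int (Suc k)" by simp
  show ?case unfolding fpow.simps hom_def using h1[unfolded e] h[of s] m
    by (simp add: hom_def)
qed

definition trans_map :: "(int \<Rightarrow> 'a \<Rightarrow> 'a) \<Rightarrow> int \<Rightarrow> int \<Rightarrow> 'a \<Rightarrow> 'a" where
  "trans_map f u s = fpow f (nat (u - s)) u"

lemma trans_map_self[simp]: "trans_map f s s x = x" unfolding trans_map_def by simp

lemma trans_map_trans_map: assumes "s \<le> u" "u \<le> v"
  shows "trans_map f v u (trans_map f u s x) = trans_map f v s x"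
proof -
  have n: "nat (v - s) = nat (v - u) + nat (u - s)" using assms by simp
  have e: "v - int (nat (v - u)) = u" using assms by simp
  show ?thesis unfolding trans_map_def n fpow_add e by simp
qed

lemma trans_map_step: assumes "s \<le> u" shows "trans_map f (u + 1) s x = f (u + 1) (trans_map f u s x)"
proof -
  have "nat (u + 1 - s) = Suc (nat (u - s))" using assms by simp
  thus ?thesis unfolding trans_map_def by simp
qed

definition colim_rel :: "(int \<Rightarrow> 'a \<Rightarrow> 'a) \<Rightarrow> int \<Rightarrow> 'a \<Rightarrow> int \<Rightarrow> 'a \<Rightarrow> bool" where
  "colim_rel f s x s' x' \<longleftrightarrow> (\<exists>u. u \<ge> s \<and> u \<ge> s' \<and> trans_map f u s x = trans_map f u s' x')"

context fixes X :: "int \<Rightarrow> ('r::ring_1, 'a) rmod" and f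
  assumes m: "\<And>s. is_mod (X s)" and h: "\<And>s. hom (X (s - 1)) (X s) (f s)"
begin

lemma trans_map_hom: "s \<le> u \<Longrightarrow> hom (X s) (X u) (trans_map f u s)"
  using fpow_hom[of X f u "nat (u - s)", OF m h] unfolding trans_map_def by simp

lemma trans_map_closed: "s \<le> u \<Longrightarrow> x \<in> mcarrier (X s) \<Longrightarrow> trans_map f u s x \<in> mcarrier (X u)"
  by (rule hom_closed[OF m m trans_map_hom])
lemma trans_map_madd: "s \<le> u \<Longrightarrow> x \<in> mcarrier (X s) \<Longrightarrow> y \<in> mcarrier (X s) \<Longrightarrow>
   trans_map f u s (madd (X s) x y) = madd (X u) (trans_map f u s x) (trans_map f u s y)"
  by (rule hom_madd[OF m m trans_map_hom])
lemma trans_map_msmult: "s \<le> u \<Longrightarrow> x \<in> mcarrier (X s) \<Longrightarrow>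
   trans_map f u s (msmult (X s) r x) = msmult (X u) r (trans_map f u s x)"
  by (rule hom_msmult[OF m m trans_map_hom])
lemma trans_map_mzero: "s \<le> u \<Longrightarrow> trans_map f u s (mzero (X s)) = mzero (X u)"
  by (rule hom_mzero[OF m m trans_map_hom])

lemma ccls_trans_map: "ccls X f s x = {(s', x'). x' \<in> mcarrier (X s') \<and>
      (\<exists>u. u \<ge> s \<and> u \<ge> s' \<and> trans_map f u s x = trans_map f u s' x')}"
  unfolding ccls_def trans_map_def ..

lemma colim_rel_eventually: assumes "colim_rel f s x s' x'" "x \<in> mcarrier (X s)" "x' \<in> mcarrier (X s')"
  shows "\<exists>u0 \<ge> s. u0 \<ge> s' \<and> (\<forall>w \<ge> u0. trans_map f w s x = trans_map f w s' x')"
proof -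
  obtain u where u: "u \<ge> s" "u \<ge> s'" "trans_map f u s x = trans_map f u s' x'" using assms
    unfolding colim_rel_def by blast
  have "\<forall>w \<ge> u. trans_map f w s x = trans_map f w s' x'"
  proof (intro allI impI)
    fix w assume "u \<le> w"
    thus "trans_map f w s x = trans_map f w s' x'"
      using trans_map_trans_map[of s u w f x] trans_map_trans_map[of s' u w f x'] u by simp
  qed
  thus ?thesis using u by blast
qed

lemma colim_rel_trans: assumes "colim_rel f s x s' x'" "colim_rel f s' x' s'' x''" "x \<in> mcarrier (X s)" "x' \<in> mcarrier (X s')"
  "x'' \<in> mcarrier (X s'')" shows "colim_rel f s x s'' x''"
proof -
  obtain u where u: "u \<ge> s" "u \<ge> s'" "\<forall>w \<ge> u. trans_map f w s x = trans_map f w s' x'"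
    using colim_rel_eventually assms by blast
  obtain v where v: "v \<ge> s'" "v \<ge> s''" "\<forall>w \<ge> v. trans_map f w s' x' = trans_map f w s'' x''"
    using colim_rel_eventually assms by blast
  show ?thesis unfolding colim_rel_def using u v by (intro exI[of _ "max u v"]) auto
qed

lemma colim_rel_sym: "colim_rel f s x s' x' \<Longrightarrow> colim_rel f s' x' s x" unfolding colim_rel_def by metis
lemma colim_rel_refl: "colim_rel f s x s x" unfolding colim_rel_def by auto

lemma ccls_colim_rel: "ccls X f s x = {(s', x'). x' \<in> mcarrier (X s') \<and> colim_rel f s x s' x'}"
  unfolding ccls_trans_map colim_rel_def ..

lemma ccls_self: "x \<in> mcarrier (X s) \<Longrightarrow> (s, x) \<in> ccls X f s x"
  unfolding ccls_colim_rel using colim_rel_refl by simp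

lemma ccls_eq_iff: assumes "x \<in> mcarrier (X s)" "x' \<in> mcarrier (X s')"
  shows "ccls X f s x = ccls X f s' x' \<longleftrightarrow> colim_rel f s x s' x'"
proof
  assume "ccls X f s x = ccls X f s' x'"
  hence "(s', x') \<in> ccls X f s x" using ccls_self assms by blast
  thus "colim_rel f s x s' x'" unfolding ccls_colim_rel by simp
next
  assume c: "colim_rel f s x s' x'"
  show "ccls X f s x = ccls X f s' x'"
    unfolding ccls_colim_rel using c colim_rel_sym colim_rel_trans assms by blast
qed

lemma rep_ccls: assumes "x \<in> mcarrier (X s)"
  shows "snd (rep (ccls X f s x)) \<in> mcarrier (X (fst (rep (ccls X f s x))))"
    "colim_rel f s x (fst (rep (ccls X f s x))) (snd (rep (ccls X f s x)))"
proof -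
  have "rep (ccls X f s x) \<in> ccls X f s x" unfolding rep_def by (rule someI, rule ccls_self[OF assms])
  thus "snd (rep (ccls X f s x)) \<in> mcarrier (X (fst (rep (ccls X f s x))))"
    "colim_rel f s x (fst (rep (ccls X f s x))) (snd (rep (ccls X f s x)))"
    unfolding ccls_colim_rel by auto
qed

lemma ccls_trans_map_eq: "s \<le> u \<Longrightarrow> x \<in> mcarrier (X s) \<Longrightarrow> ccls X f u (trans_map f u s x) = ccls X f s x"
  using ccls_eq_iff[of "trans_map f u s x" u x s] trans_map_closed unfolding colim_rel_def
    by (auto intro!: exI[of _ u])

lemma colim_madd_rep: "madd (colim X f) P Q =
   ccls X f (max (fst (rep P)) (fst (rep Q)))
     (madd (X (max (fst (rep P)) (fst (rep Q))))
        (trans_map f (max (fst (rep P)) (fst (rep Q))) (fst (rep P)) (snd (rep P)))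
        (trans_map f (max (fst (rep P)) (fst (rep Q))) (fst (rep Q)) (snd (rep Q))))"
  unfolding colim_def rmod.select_convs Let_def trans_map_def by (simp add: case_prod_beta)

lemma colim_msmult_rep: "msmult (colim X f) r P = ccls X f (fst (rep P)) (msmult (X (fst (rep P))) r (snd (rep P)))"
  unfolding colim_def rmod.select_convs Let_def by (simp add: case_prod_beta)

lemma colim_carrier: "mcarrier (colim X f) = {ccls X f s x | s x. x \<in> mcarrier (X s)}"
  unfolding colim_def rmod.select_convs ..
lemma colim_zero: "mzero (colim X f) = ccls X f 0 (mzero (X 0))"
  unfolding colim_def rmod.select_convs ..

lemma trans_map_madd_trans_map: assumes "s1 \<le> u" "s2 \<le> u" "u \<le> z" "x \<in> mcarrier (X s1)" "y \<in> mcarrier (X s2)"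
  shows "trans_map f z u (madd (X u) (trans_map f u s1 x) (trans_map f u s2 y)) = madd (X z) (trans_map f z s1 x) (trans_map f z s2 y)"
  using trans_map_madd[of u z "trans_map f u s1 x" "trans_map f u s2 y"] trans_map_closed assms trans_map_trans_map[of s1 u z f x] trans_map_trans_map[of s2 u z f y] by simp

lemma colim_madd: assumes x: "x \<in> mcarrier (X s)" and y: "y \<in> mcarrier (X s')"
  and v: "v \<ge> s" "v \<ge> s'"
  shows "madd (colim X f) (ccls X f s x) (ccls X f s' y) = ccls X f v (madd (X v) (trans_map f v s x) (trans_map f v s' y))"
proof -
  define s1 x1 s2 y1 where "s1 = fst (rep (ccls X f s x))" "x1 = snd (rep (ccls X f s x))"
    "s2 = fst (rep (ccls X f s' y))" "y1 = snd (rep (ccls X f s' y))"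
  have r: "x1 \<in> mcarrier (X s1)" "colim_rel f s x s1 x1" "y1 \<in> mcarrier (X s2)" "colim_rel f s' y s2 y1"
    using rep_ccls[OF x] rep_ccls[OF y] unfolding s1_x1_s2_y1_def by auto
  define u where "u = max s1 s2"
  have L: "madd (colim X f) (ccls X f s x) (ccls X f s' y) = ccls X f u (madd (X u) (trans_map f u s1 x1) (trans_map f u s2 y1))"
    unfolding colim_madd_rep s1_x1_s2_y1_def u_def ..
  obtain u1 where u1: "\<forall>w \<ge> u1. trans_map f w s x = trans_map f w s1 x1"
    using colim_rel_eventually[OF r(2) x r(1)] by blast
  obtain u2 where u2: "\<forall>w \<ge> u2. trans_map f w s' y = trans_map f w s2 y1"
    using colim_rel_eventually[OF r(4) y r(3)] by blast
  define z where "z = max (max u1 u2) (max u v)"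
  have zz: "z \<ge> u1" "z \<ge> u2" "z \<ge> u" "z \<ge> v" "u \<ge> s1" "u \<ge> s2" unfolding z_def u_def by auto
  have e1: "trans_map f z u (madd (X u) (trans_map f u s1 x1) (trans_map f u s2 y1)) = madd (X z) (trans_map f z s1 x1) (trans_map f z s2 y1)"
    using trans_map_madd_trans_map zz r by simp
  have e2: "trans_map f z v (madd (X v) (trans_map f v s x) (trans_map f v s' y)) = madd (X z) (trans_map f z s x) (trans_map f z s' y)"
    using trans_map_madd_trans_map zz v x y by simp
  have "colim_rel f u (madd (X u) (trans_map f u s1 x1) (trans_map f u s2 y1)) v (madd (X v) (trans_map f v s x) (trans_map f v s' y))"
    unfolding colim_rel_def using e1 e2 u1 u2 zz by (intro exI[of _ z]) auto
  moreover have "madd (X u) (trans_map f u s1 x1) (trans_map f u s2 y1) \<in> mcarrier (X u)"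
    using madd_closed[OF m] trans_map_closed zz r by simp
  moreover have "madd (X v) (trans_map f v s x) (trans_map f v s' y) \<in> mcarrier (X v)"
    using madd_closed[OF m] trans_map_closed v x y by simp
  ultimately show ?thesis unfolding L using ccls_eq_iff by blast
qed

lemma colim_msmult: assumes x: "x \<in> mcarrier (X s)"
  shows "msmult (colim X f) r (ccls X f s x) = ccls X f s (msmult (X s) r x)"
proof -
  define s1 x1 where "s1 = fst (rep (ccls X f s x))" "x1 = snd (rep (ccls X f s x))"
  have r: "x1 \<in> mcarrier (X s1)" "colim_rel f s x s1 x1"
    using rep_ccls[OF x] unfolding s1_x1_def by auto
  have L: "msmult (colim X f) r (ccls X f s x) = ccls X f s1 (msmult (X s1) r x1)"
    unfolding colim_msmult_rep s1_x1_def ..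
  obtain u where u: "u \<ge> s" "u \<ge> s1" "trans_map f u s x = trans_map f u s1 x1" using r
    unfolding colim_rel_def by blast
  have "colim_rel f s1 (msmult (X s1) r x1) s (msmult (X s) r x)"
    unfolding colim_rel_def using u trans_map_msmult r x by (intro exI[of _ u]) simp
  thus ?thesis unfolding L using ccls_eq_iff msmult_closed[OF m] r x by blast
qed

lemma ccls_eq_mzero_iff: assumes x: "x \<in> mcarrier (X s)"
  shows "ccls X f s x = mzero (colim X f) \<longleftrightarrow> (\<exists>u \<ge> s. trans_map f u s x = mzero (X u))"
proof -
  have "ccls X f s x = mzero (colim X f) \<longleftrightarrow> colim_rel f s x 0 (mzero (X 0))"
    unfolding colim_zero using ccls_eq_iff x mzero_closed[OF m] by blast
  also have "\<dots> \<longleftrightarrow> (\<exists>u \<ge> s. trans_map f u s x = mzero (X u))"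
  proof
    assume "colim_rel f s x 0 (mzero (X 0))"
    then obtain u where "u \<ge> s" "u \<ge> 0" "trans_map f u s x = trans_map f u 0 (mzero (X 0))"
      unfolding colim_rel_def by blast
    thus "\<exists>u \<ge> s. trans_map f u s x = mzero (X u)" using trans_map_mzero by auto
  next
    assume "\<exists>u \<ge> s. trans_map f u s x = mzero (X u)"
    then obtain u where u: "u \<ge> s" "trans_map f u s x = mzero (X u)" by blast
    define w where "w = max u 0"
    have "trans_map f w s x = trans_map f w u (trans_map f u s x)"
      using trans_map_trans_map[of s u w f x] u unfolding w_def by simp
    also have "\<dots> = mzero (X w)" using u trans_map_mzero unfolding w_def by simp
    also have "\<dots> = trans_map f w 0 (mzero (X 0))" using trans_map_mzero unfolding w_def by simp
    finally show "colim_rel f s x 0 (mzero (X 0))" unfolding colim_rel_def w_def using u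
      by (intro exI[of _ "max u 0"]) auto
  qed
  finally show ?thesis .
qed

lemma ccls_in_colim: "x \<in> mcarrier (X s) \<Longrightarrow> ccls X f s x \<in> mcarrier (colim X f)"
  unfolding colim_carrier by blast

lemma colim_madd_same: "a \<in> mcarrier (X v) \<Longrightarrow> b \<in> mcarrier (X v) \<Longrightarrow>
  madd (colim X f) (ccls X f v a) (ccls X f v b) = ccls X f v (madd (X v) a b)"
  using colim_madd[of a v b v v] by simp

lemma colim_elem_ex: "P \<in> mcarrier (colim X f) \<Longrightarrow> \<exists>s x. x \<in> mcarrier (X s) \<and> P = ccls X f s x"
  unfolding colim_carrier by blast

lemma ccls_lift: "x \<in> mcarrier (X s) \<Longrightarrow> s \<le> v \<Longrightarrow> ccls X f s x = ccls X f v (trans_map f v s x) \<and> trans_map f v s x \<in> mcarrier (X v)"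
  using ccls_trans_map_eq trans_map_closed by simp

lemma colim_common_level:
  assumes "P \<in> mcarrier (colim X f)" "Q \<in> mcarrier (colim X f)" "R \<in> mcarrier (colim X f)"
  shows "\<exists>v a b c. a \<in> mcarrier (X v) \<and> b \<in> mcarrier (X v) \<and> c \<in> mcarrier (X v) \<and>
     P = ccls X f v a \<and> Q = ccls X f v b \<and> R = ccls X f v c \<and> v \<ge> 0"
proof -
  obtain s1 x1 s2 x2 s3 x3 where e: "x1 \<in> mcarrier (X s1)" "P = ccls X f s1 x1" "x2 \<in> mcarrier (X s2)" "Q = ccls X f s2 x2"
     "x3 \<in> mcarrier (X s3)" "R = ccls X f s3 x3"
    using colim_elem_ex assms by metis
  define v where "v = max 0 (max s3 (max s1 s2))"
  have "v \<ge> s1" "v \<ge> s2" "v \<ge> s3" "v \<ge> 0" unfolding v_def by auto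
  hence "trans_map f v s1 x1 \<in> mcarrier (X v) \<and> trans_map f v s2 x2 \<in> mcarrier (X v) \<and> trans_map f v s3 x3 \<in> mcarrier (X v) \<and>
    P = ccls X f v (trans_map f v s1 x1) \<and> Q = ccls X f v (trans_map f v s2 x2) \<and> R = ccls X f v (trans_map f v s3 x3) \<and> v \<ge> 0"
    using ccls_lift[OF e(1), of v] ccls_lift[OF e(3), of v] ccls_lift[OF e(5), of v] e by simp
  thus ?thesis by blast
qed

lemma colim_mzero_level: "v \<ge> 0 \<Longrightarrow> mzero (colim X f) = ccls X f v (mzero (X v))"
  unfolding colim_zero using ccls_lift[OF mzero_closed[OF m], of 0 v] trans_map_mzero by simp

lemma colim_is_mod: "is_mod (colim X f)"
  unfolding is_mod_def
proof (intro conjI ballI allI)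
  show "mzero (colim X f) \<in> mcarrier (colim X f)" unfolding colim_zero
    by (rule ccls_in_colim[OF mzero_closed[OF m]])
next
  fix P Q assume "P \<in> mcarrier (colim X f)" "Q \<in> mcarrier (colim X f)"
  then obtain v a b where "a \<in> mcarrier (X v)" "b \<in> mcarrier (X v)" "P = ccls X f v a" "Q = ccls X f v b"
    using colim_common_level[of P Q Q] by blast
  thus "madd (colim X f) P Q \<in> mcarrier (colim X f)"
    using colim_madd_same ccls_in_colim madd_closed[OF m] by simp
  show "madd (colim X f) P Q = madd (colim X f) Q P"
    using colim_madd_same madd_comm[OF m] \<open>a \<in> _\<close> \<open>b \<in> _\<close> \<open>P = _\<close> \<open>Q = _\<close> by simp
  show "msmult (colim X f) r (madd (colim X f) P Q) =
       madd (colim X f) (msmult (colim X f) r P) (msmult (colim X f) r Q)" for r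
    using colim_madd_same colim_msmult msmult_madd_distrib[OF m] \<open>a \<in> _\<close> \<open>b \<in> _\<close> \<open>P = _\<close> \<open>Q = _\<close> madd_closed[OF m] msmult_closed[OF m] by simp
next
  fix r P assume "P \<in> mcarrier (colim X f)"
  then obtain s x where "x \<in> mcarrier (X s)" "P = ccls X f s x" using colim_elem_ex by blast
  thus "msmult (colim X f) r P \<in> mcarrier (colim X f)"
    using colim_msmult ccls_in_colim msmult_closed[OF m] by simp
next
  fix P Q R assume "P \<in> mcarrier (colim X f)" "Q \<in> mcarrier (colim X f)" "R \<in> mcarrier (colim X f)"
  then obtain v a b c where "a \<in> mcarrier (X v)" "b \<in> mcarrier (X v)" "c \<in> mcarrier (X v)"
    "P = ccls X f v a" "Q = ccls X f v b" "R = ccls X f v c"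
    using colim_common_level by blast
  thus "madd (colim X f) (madd (colim X f) P Q) R = madd (colim X f) P (madd (colim X f) Q R)"
    using colim_madd_same madd_assoc[OF m] madd_closed[OF m] by simp
next
  fix P assume "P \<in> mcarrier (colim X f)"
  then obtain v a where "a \<in> mcarrier (X v)" "P = ccls X f v a" "v \<ge> 0"
    using colim_common_level[of P P P] by blast
  thus "madd (colim X f) (mzero (colim X f)) P = P"
    using colim_madd_same colim_mzero_level mzero_closed[OF m] madd_zero_left[OF m] by simp
  show "\<exists>Q\<in>mcarrier (colim X f). madd (colim X f) P Q = mzero (colim X f)"
    using colim_madd_same colim_mzero_level mneg_closed[OF m] madd_mneg[OF m] ccls_in_colim \<open>a \<in> _\<close> \<open>P = _\<close> \<open>v \<ge> 0\<close>
    by (intro bexI[of _ "ccls X f v (mneg (X v) a)"]) auto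
  show "msmult (colim X f) 1 P = P" using colim_msmult msmult_one[OF m] \<open>a \<in> _\<close> \<open>P = _\<close> by simp
  show "msmult (colim X f) (r + q) P = madd (colim X f) (msmult (colim X f) r P) (msmult (colim X f) q P)" for r q
    using colim_msmult colim_madd_same msmult_add_distrib[OF m] msmult_closed[OF m] \<open>a \<in> _\<close> \<open>P = _\<close>
      by simp
  show "msmult (colim X f) (r * q) P = msmult (colim X f) r (msmult (colim X f) q P)" for r q
    using colim_msmult msmult_msmult[OF m] msmult_closed[OF m] \<open>a \<in> _\<close> \<open>P = _\<close> by simp
qed

lemma cinj_hom: "hom (X s) (colim X f) (cinj X f s)"
  unfolding hom_def cinj_def using ccls_in_colim colim_madd_same colim_msmult by simp

end

section \<open>Exact couples\<close>

lemma int_index_normalize[simp]: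
  "(s::int) - (1 + int r) = s - 1 - int r" "(s::int) - int r - 1 = s - 1 - int r"
  by simp_all

locale exact_couple_setting =
  fixes A :: "int \<Rightarrow> int \<Rightarrow> ('r::ring_1, 'a) rmod" and E :: "int \<Rightarrow> int \<Rightarrow> ('r, 'e) rmod"
    and alpha :: "int \<Rightarrow> int \<Rightarrow> 'a \<Rightarrow> 'a"
    and beta :: "int \<Rightarrow> int \<Rightarrow> 'a \<Rightarrow> 'e"
    and gamma :: "int \<Rightarrow> int \<Rightarrow> 'e \<Rightarrow> 'a"
    and db dg :: int
  assumes ec: "exact_couple A E alpha beta gamma db dg"
begin

lemma A_mod[simp]: "is_mod (A s t)" and E_mod[simp]: "is_mod (E s t)"
  using ec unfolding exact_couple_def by auto

lemma alpha_hom: "hom (A (s - 1) t) (A s t) (alpha s t)"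
  using ec unfolding exact_couple_def by auto

lemma beta_hom: "hom (A s t) (E s (t + db)) (beta s t)"
  using ec unfolding exact_couple_def by auto

lemma gamma_hom: "hom (E s t) (A (s - 1) (t + dg)) (gamma s t)"
  using ec unfolding exact_couple_def by auto

lemma exact_alpha_beta: "alpha s t ` mcarrier (A (s - 1) t) = kerm (A s t) (E s (t + db)) (beta s t)"
  using ec unfolding exact_couple_def by auto

lemma exact_beta_gamma:
  "beta s t ` mcarrier (A s t) = kerm (E s (t + db)) (A (s - 1) (t + db + dg)) (gamma s (t + db))"
  using ec unfolding exact_couple_def by auto

lemma exact_gamma_alpha:
  "gamma s t ` mcarrier (E s t) = kerm (A (s - 1) (t + dg)) (A s (t + dg)) (alpha s (t + dg))"
  using ec unfolding exact_couple_def by auto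

lemma gamma_hom': "hom (E s (t - dg)) (A (s - 1) t) (gamma s (t - dg))" using gamma_hom[of s "t - dg"]
  by simp
lemma exact_gamma_alpha': "gamma s (t - dg) ` mcarrier (E s (t - dg)) = kerm (A (s - 1) t) (A s t) (alpha s t)"
  using exact_gamma_alpha[of s "t - dg"] by simp

lemma alpha_closed[simp]: "x \<in> mcarrier (A (s - 1) t) \<Longrightarrow> alpha s t x \<in> mcarrier (A s t)"
  by (rule hom_closed[OF A_mod A_mod alpha_hom])

lemma apow_hom: "hom (A (s - int k) t) (A s t) (apow alpha t k s)"
  using fpow_hom[of "\<lambda>s. A s t" "\<lambda>s. alpha s t" s k, OF A_mod alpha_hom] .

lemma apow_closed[simp]: "x \<in> mcarrier (A (s - int k) t) \<Longrightarrow> apow alpha t k s x \<in> mcarrier (A s t)"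
  by (rule hom_closed[OF A_mod A_mod apow_hom])

definition im_pow where "im_pow t r s = apow alpha t r s ` mcarrier (A (s - int r) t)"
definition im_inf where "im_inf t s = {z \<in> mcarrier (A s t). \<forall>r. z \<in> im_pow t r s}"

lemma im_pow_submodule: "submodule (A s t) (im_pow t r s)"
  unfolding im_pow_def by (rule hom_image_submodule[OF A_mod A_mod apow_hom submodule_carrier_self[OF A_mod]])

lemma im_pow_closed: "x \<in> im_pow t r s \<Longrightarrow> x \<in> mcarrier (A s t)"
  using submodule_carrier[OF im_pow_submodule] .

lemma alpha_im_pow_Suc: "x \<in> im_pow t r (s - 1) \<Longrightarrow> alpha s t x \<in> im_pow t (Suc r) s"
proof -
  assume "x \<in> im_pow t r (s - 1)"
  then obtain y where y: "y \<in> mcarrier (A (s - 1 - int r) t)" "x = apow alpha t r (s - 1) y"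
    unfolding im_pow_def by blast
  have "alpha s t x = apow alpha t (Suc r) s y" using y by simp
  moreover have "s - 1 - int r = s - int (Suc r)" by simp
  hence "y \<in> mcarrier (A (s - int (Suc r)) t)" using y(1) by metis
  ultimately show ?thesis unfolding im_pow_def by (simp only: image_eqI)
qed

lemma im_pow_Suc_subset: "x \<in> im_pow t (Suc r) s \<Longrightarrow> x \<in> im_pow t r s"
proof -
  assume "x \<in> im_pow t (Suc r) s"
  then obtain y where y: "y \<in> mcarrier (A (s - int (Suc r)) t)" "x = apow alpha t (Suc r) s y"
    unfolding im_pow_def by blast
  have e: "s - int r - 1 = s - int (Suc r)" by simp
  have "x = apow alpha t r s (alpha (s - int r) t y)" using y fpow_Suc_right_apply by metis
  moreover have "alpha (s - int r) t y \<in> mcarrier (A (s - int r) t)"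
    using alpha_closed[of y "s - int r" t] y e by simp
  ultimately show ?thesis unfolding im_pow_def by blast
qed

lemma alpha_im_pow: "x \<in> im_pow t r (s - 1) \<Longrightarrow> alpha s t x \<in> im_pow t r s"
  using alpha_im_pow_Suc im_pow_Suc_subset by blast

lemma Zr_Suc_gamma: "Zr A E alpha gamma dg (Suc r) q t = {x \<in> mcarrier (E q t). gamma q t x \<in> im_pow (t + dg) r (q - 1)}"
  unfolding Zr_def im_pow_def by simp

lemma Zr_Suc: "Zr A E alpha gamma dg (Suc r) q (t - dg) = {x \<in> mcarrier (E q (t - dg)). gamma q (t - dg) x \<in> im_pow t r (q - 1)}"
  using Zr_Suc_gamma[of r q "t - dg"] by simp

lemma Zinf_eq_gamma_im_inf: "Zinf A E alpha gamma dg q t = {x \<in> mcarrier (E q t). gamma q t x \<in> im_inf (t + dg) (q - 1)}"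
proof -
  have "{1..} = range Suc" by (auto simp: image_iff Suc_le_eq gr0_conv_Suc)
  hence "Zinf A E alpha gamma dg q t = (\<Inter>r. Zr A E alpha gamma dg (Suc r) q t)" unfolding Zinf_def
    by simp
  thus ?thesis unfolding Zr_Suc_gamma im_inf_def using hom_closed[OF E_mod A_mod gamma_hom] by auto
qed

lemma Zr_submodule: "submodule (E q (t - dg)) (Zr A E alpha gamma dg (Suc r) q (t - dg))"
  unfolding Zr_Suc by (rule hom_vimage_submodule[OF E_mod A_mod gamma_hom' im_pow_submodule])

lemma alpha_trans_map_closed: "s \<le> u \<Longrightarrow> x \<in> mcarrier (A s t) \<Longrightarrow> trans_map (\<lambda>s. alpha s t) u s x \<in> mcarrier (A u t)"
  using trans_map_closed[of "\<lambda>s. A s t" "\<lambda>s. alpha s t" s u x] alpha_hom by simp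
lemma im_inf_closed: "z \<in> im_inf t q \<Longrightarrow> z \<in> mcarrier (A q t)" unfolding im_inf_def by blast

lemma im_inf_lift_seq:
  assumes z: "z \<in> im_inf t q"
  obtains v where "\<And>r. v r \<in> im_pow t r (q - 1)" and "\<And>r. alpha q t (v r) = z"
proof -
  have "\<forall>r. \<exists>u. u \<in> mcarrier (A (q - 1 - int r) t) \<and> apow alpha t (Suc r) q u = z"
  proof
    fix r
    have "z \<in> im_pow t (Suc r) q" using z unfolding im_inf_def by blast
    thus "\<exists>u. u \<in> mcarrier (A (q - 1 - int r) t) \<and> apow alpha t (Suc r) q u = z"
      unfolding im_pow_def by auto
  qed
  then obtain u where u: "\<And>r. u r \<in> mcarrier (A (q - 1 - int r) t)" "\<And>r. apow alpha t (Suc r) q (u r) = z"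
    by metis
  show thesis
  proof (rule that)
    show "apow alpha t r (q - 1) (u r) \<in> im_pow t r (q - 1)" for r unfolding im_pow_def using u(1)
      by simp
    show "alpha q t (apow alpha t r (q - 1) (u r)) = z" for r using u(2)[of r] by simp
  qed
qed

lemma im_inf_of_const_seq:
  assumes const: "\<And>r. n (Suc r) = n r" and im: "\<And>r. n r \<in> im_pow t r s"
  shows "n 0 \<in> im_inf t s"
proof -
  have const0: "n r = n 0" for r by (induction r) (simp_all add: const)
  have "n 0 \<in> im_pow t r s" for r using im[of r] unfolding const0[of r] .
  thus ?thesis unfolding im_inf_def using im_pow_closed by blast
qed

lemma kerm_alpha_im_pow_gamma:
  assumes "w \<in> kerm (A (q - 1) t) (A q t) (alpha q t)" and "w \<in> im_pow t r (q - 1)"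
  obtains e where "e \<in> Zr A E alpha gamma dg (Suc r) q (t - dg)" and "gamma q (t - dg) e = w"
  using assms exact_gamma_alpha'[of q t] unfolding Zr_Suc by force

lemma backward_chain_extends:
  assumes W: "\<And>k. W k \<in> mcarrier (A (q - int k) t)"
    and chain: "\<And>k. alpha (q - int k) t (W (Suc k)) = W k"
  obtains x where "\<And>s. x s \<in> mcarrier (A s t)" and "\<And>s. alpha s t (x (s - 1)) = x s" and "x q = W 0"
proof -
  define x where "x s = (if s \<le> q then W (nat (q - s)) else trans_map (\<lambda>s. alpha s t) s q (W 0))" for s
  have "x s \<in> mcarrier (A s t)" for s
  proof (cases "s \<le> q")
    case True
    hence "q - int (nat (q - s)) = s" by simp
    thus ?thesis unfolding x_def using True W[of "nat (q - s)"] by simp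
  next
    case False thus ?thesis unfolding x_def using alpha_trans_map_closed[of q s "W 0" t] W[of 0] by simp
  qed
  moreover have "alpha s t (x (s - 1)) = x s" for s
  proof (cases "s \<le> q")
    case True
    define k where "k = nat (q - s)"
    have "nat (q - (s - 1)) = Suc k" and "q - int k = s" unfolding k_def using True by auto
    thus ?thesis unfolding x_def k_def[symmetric] using True chain[of k] by simp
  next
    case False
    hence "trans_map (\<lambda>s. alpha s t) (s - 1 + 1) q (W 0) = alpha (s - 1 + 1) t (trans_map (\<lambda>s. alpha s t) (s - 1) q (W 0))"
      by (intro trans_map_step) simp
    thus ?thesis unfolding x_def using False by (cases "s = q + 1") auto
  qed
  moreover have "x q = W 0" unfolding x_def by simp
  ultimately show thesis by (rule that)
qed

lemma iota_eq: "iota A alpha s t = ccls (\<lambda>s. A s t) (\<lambda>s. alpha s t) s"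
  unfolding iota_def cinj_def ..

lemma Ainf_mod[simp]: "is_mod (Ainf A alpha t)"
  unfolding Ainf_def using colim_is_mod[of "\<lambda>s. A s t" "\<lambda>s. alpha s t"] alpha_hom by simp

lemma iota_hom: "hom (A s t) (Ainf A alpha t) (iota A alpha s t)"
  unfolding Ainf_def iota_def using cinj_hom[of "\<lambda>s. A s t" "\<lambda>s. alpha s t" s] alpha_hom by simp

lemma iota_closed[simp]: "x \<in> mcarrier (A s t) \<Longrightarrow> iota A alpha s t x \<in> mcarrier (Ainf A alpha t)"
  by (rule hom_closed[OF A_mod Ainf_mod iota_hom])
lemma iota_madd: "x \<in> mcarrier (A s t) \<Longrightarrow> y \<in> mcarrier (A s t) \<Longrightarrow>
  iota A alpha s t (madd (A s t) x y) = madd (Ainf A alpha t) (iota A alpha s t x) (iota A alpha s t y)"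
  by (rule hom_madd[OF A_mod Ainf_mod iota_hom])
lemma iota_msmult: "x \<in> mcarrier (A s t) \<Longrightarrow>
  iota A alpha s t (msmult (A s t) r x) = msmult (Ainf A alpha t) r (iota A alpha s t x)"
  by (rule hom_msmult[OF A_mod Ainf_mod iota_hom])
lemma iota_mdiff: "x \<in> mcarrier (A s t) \<Longrightarrow> y \<in> mcarrier (A s t) \<Longrightarrow>
  iota A alpha s t (mdiff (A s t) x y) = mdiff (Ainf A alpha t) (iota A alpha s t x) (iota A alpha s t y)"
  by (rule hom_mdiff[OF A_mod Ainf_mod iota_hom])
lemma iota_mzero[simp]: "iota A alpha s t (mzero (A s t)) = mzero (Ainf A alpha t)"
  by (rule hom_mzero[OF A_mod Ainf_mod iota_hom])

lemma iota_trans_map: "s \<le> u \<Longrightarrow> x \<in> mcarrier (A s t) \<Longrightarrow>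
   iota A alpha u t (trans_map (\<lambda>s. alpha s t) u s x) = iota A alpha s t x"
  unfolding iota_eq using ccls_trans_map_eq[of "\<lambda>s. A s t" "\<lambda>s. alpha s t" s u x] alpha_hom by simp

lemma iota_alpha: "x \<in> mcarrier (A (s - 1) t) \<Longrightarrow> iota A alpha s t (alpha s t x) = iota A alpha (s - 1) t x"
proof -
  assume x: "x \<in> mcarrier (A (s - 1) t)"
  have "trans_map (\<lambda>s. alpha s t) s (s - 1) x = alpha s t x" unfolding trans_map_def by simp
  thus ?thesis using iota_trans_map[of "s - 1" s x t] x by simp
qed

lemma iota_apow: "x \<in> mcarrier (A (s - int r) t) \<Longrightarrow> iota A alpha s t (apow alpha t r s x) = iota A alpha (s - int r) t x"
proof -
  assume x: "x \<in> mcarrier (A (s - int r) t)"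
  have "trans_map (\<lambda>s. alpha s t) s (s - int r) x = apow alpha t r s x" unfolding trans_map_def by simp
  thus ?thesis using iota_trans_map[of "s - int r" s x t] x by simp
qed

lemma iota_eq_mzero_iff: "x \<in> mcarrier (A s t) \<Longrightarrow>
  iota A alpha s t x = mzero (Ainf A alpha t) \<longleftrightarrow> (\<exists>u \<ge> s. trans_map (\<lambda>s. alpha s t) u s x = mzero (A u t))"
  unfolding iota_eq Ainf_def using ccls_eq_mzero_iff[of "\<lambda>s. A s t" "\<lambda>s. alpha s t" x s] alpha_hom
    by simp

lemma Ainf_carrier: "mcarrier (Ainf A alpha t) = {iota A alpha s t x | s x. x \<in> mcarrier (A s t)}"
  unfolding Ainf_def iota_eq using colim_carrier[of "\<lambda>s. A s t" "\<lambda>s. alpha s t"] alpha_hom by simp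

lemma Ainf_elem_ex: "P \<in> mcarrier (Ainf A alpha t) \<Longrightarrow> \<exists>s x. x \<in> mcarrier (A s t) \<and> P = iota A alpha s t x"
  unfolding Ainf_carrier by blast

lemma Ffilt_submodule: "submodule (Ainf A alpha t) (Ffilt A alpha s t)"
  unfolding Ffilt_def by (rule hom_image_submodule[OF A_mod Ainf_mod iota_hom submodule_carrier_self[OF A_mod]])

lemma Ffilt_mono: "Ffilt A alpha (s - 1) t \<subseteq> Ffilt A alpha s t"
proof
  fix P assume "P \<in> Ffilt A alpha (s - 1) t"
  then obtain x where x: "x \<in> mcarrier (A (s - 1) t)" "P = iota A alpha (s - 1) t x" unfolding Ffilt_def
    by blast
  hence "P = iota A alpha s t (alpha s t x)" using iota_alpha by simp
  thus "P \<in> Ffilt A alpha s t" unfolding Ffilt_def using x(1) by simp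
qed

lemma Ffilt_mono_le: "s \<le> u \<Longrightarrow> Ffilt A alpha s t \<subseteq> Ffilt A alpha u t"
proof -
  assume "s \<le> u"
  show ?thesis
  proof
    fix P assume "P \<in> Ffilt A alpha s t"
    then obtain x where x: "x \<in> mcarrier (A s t)" "P = iota A alpha s t x" unfolding Ffilt_def by blast
    hence "P = iota A alpha u t (trans_map (\<lambda>s. alpha s t) u s x)" using iota_trans_map \<open>s \<le> u\<close> by simp
    thus "P \<in> Ffilt A alpha u t" unfolding Ffilt_def using alpha_trans_map_closed \<open>s \<le> u\<close> x(1) by simp
  qed
qed

lemma filtration_exhaustive: "(\<Union>s. Ffilt A alpha s t) = mcarrier (Ainf A alpha t)"
proof
  show "(\<Union>s. Ffilt A alpha s t) \<subseteq> mcarrier (Ainf A alpha t)"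
  proof (rule UN_least)
    fix s show "Ffilt A alpha s t \<subseteq> mcarrier (Ainf A alpha t)" using Ffilt_submodule[of t s]
      unfolding submodule_def by blast
  qed
  show "mcarrier (Ainf A alpha t) \<subseteq> (\<Union>s. Ffilt A alpha s t)"
  proof
    fix P assume "P \<in> mcarrier (Ainf A alpha t)"
    then obtain s x where "x \<in> mcarrier (A s t)" "P = iota A alpha s t x" using Ainf_elem_ex by blast
    hence "P \<in> Ffilt A alpha s t" unfolding Ffilt_def by simp
    thus "P \<in> (\<Union>s. Ffilt A alpha s t)" by blast
  qed
qed

lemma alpha_pow_vanishes_iff_iota: assumes y: "y \<in> mcarrier (A s t)"
  shows "(\<exists>r\<ge>1. apow alpha t (r - 1) (s + int r - 1) y = mzero (A (s + int r - 1) t)) \<longleftrightarrow>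
    iota A alpha s t y = mzero (Ainf A alpha t)"
proof -
  have "(\<exists>r\<ge>1. apow alpha t (r - 1) (s + int r - 1) y = mzero (A (s + int r - 1) t)) \<longleftrightarrow>
     (\<exists>u \<ge> s. trans_map (\<lambda>s. alpha s t) u s y = mzero (A u t))"
  proof
    assume "\<exists>r\<ge>1. apow alpha t (r - 1) (s + int r - 1) y = mzero (A (s + int r - 1) t)"
    then obtain r where r: "r \<ge> 1" "apow alpha t (r - 1) (s + int r - 1) y = mzero (A (s + int r - 1) t)"
      by blast
    have "nat (s + int r - 1 - s) = r - 1" using r by simp
    hence "trans_map (\<lambda>s. alpha s t) (s + int r - 1) s y = mzero (A (s + int r - 1) t)"
      unfolding trans_map_def using r by simp
    moreover have "s + int r - 1 \<ge> s" using r by simp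
    ultimately show "\<exists>u \<ge> s. trans_map (\<lambda>s. alpha s t) u s y = mzero (A u t)" by blast
  next
    assume "\<exists>u \<ge> s. trans_map (\<lambda>s. alpha s t) u s y = mzero (A u t)"
    then obtain u where u: "u \<ge> s" "trans_map (\<lambda>s. alpha s t) u s y = mzero (A u t)" by blast
    define r where "r = Suc (nat (u - s))"
    have e: "s + int r - 1 = u" "r - 1 = nat (u - s)" unfolding r_def using u by auto
    have "apow alpha t (r - 1) (s + int r - 1) y = mzero (A (s + int r - 1) t)"
      unfolding e using u unfolding trans_map_def by simp
    moreover have "r \<ge> 1" unfolding r_def by simp
    ultimately show "\<exists>r\<ge>1. apow alpha t (r - 1) (s + int r - 1) y = mzero (A (s + int r - 1) t)" by blast
  qed
  also have "\<dots> \<longleftrightarrow> iota A alpha s t y = mzero (Ainf A alpha t)" using iota_eq_mzero_iff[OF y] by simp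
  finally show ?thesis .
qed

lemma kerm_iota_eq_UN: "kerm (A s t) (Ainf A alpha t) (iota A alpha s t) =
    (\<Union>r\<in>{1..}. {y \<in> mcarrier (A s t). apow alpha t (r - 1) (s + int r - 1) y = mzero (A (s + int r - 1) t)})"
proof (rule set_eqI)
  fix y
  show "y \<in> kerm (A s t) (Ainf A alpha t) (iota A alpha s t) \<longleftrightarrow> y \<in> (\<Union>r\<in>{1..}.
      {y \<in> mcarrier (A s t). apow alpha t (r - 1) (s + int r - 1) y = mzero (A (s + int r - 1) t)})"
    using alpha_pow_vanishes_iff_iota[of y s t] unfolding kerm_def by blast
qed

lemma Binf_eq_image_beta_kerm:
  "Binf A alpha beta db s (t + db) = beta s t ` kerm (A s t) (Ainf A alpha t) (iota A alpha s t)"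
  unfolding Binf_def Br_def kerm_iota_eq_UN by (simp add: image_UN)

lemma Ffilt_pred_eq: "Ffilt A alpha (s - 1) t = iota A alpha s t ` kerm (A s t) (E s (t + db)) (beta s t)"
proof -
  have "Ffilt A alpha (s - 1) t = iota A alpha s t ` alpha s t ` mcarrier (A (s - 1) t)"
    unfolding Ffilt_def image_image using iota_alpha by simp
  thus ?thesis using exact_alpha_beta by simp
qed

subsection \<open>The group \<open>W\<close>\<close>

definition Ktower where "Ktower t s = (\<lambda>r. sub (A s t) (Kim A alpha s r t))"
definition Kprod where "Kprod t s = prodm (Ktower t s)"
definition Kdiffs where "Kdiffs t s = coboundaries (Ktower t s) Suc (\<lambda>r. id)"
definition Wmap where "Wmap t s = Rlim_nat_map (Ktower t s) (\<lambda>r. id) (\<lambda>x r. alpha s t (x r))"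

lemma Kim_eq: "Kim A alpha s r t = kerm (A s t) (Ainf A alpha t) (iota A alpha s t) \<inter> im_pow t r s"
  unfolding Kim_def im_pow_def ..

lemma Kim_submodule: "submodule (A s t) (Kim A alpha s r t)"
  unfolding Kim_eq by (rule submodule_Int[OF kerm_submodule[OF A_mod Ainf_mod iota_hom] im_pow_submodule])

lemma Kim_Suc_subset: "Kim A alpha s (Suc r) t \<subseteq> Kim A alpha s r t"
  unfolding Kim_eq using im_pow_Suc_subset by auto

lemma Kim_closed: "x \<in> Kim A alpha s r t \<Longrightarrow> x \<in> mcarrier (A s t)"
  using submodule_carrier[OF Kim_submodule] .

lemma Ktower_mod: "is_mod (Ktower t s r)" unfolding Ktower_def
  by (rule is_mod_sub[OF A_mod Kim_submodule])
lemma Ktower_hom: "hom (Ktower t s (Suc r)) (Ktower t s r) id"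
  unfolding Ktower_def using hom_id_sub[OF Kim_Suc_subset[of s r t], of "A s t"] by simp
lemma Kprod_mod: "is_mod (Kprod t s)" unfolding Kprod_def by (rule prodm_is_mod[OF Ktower_mod])
lemma Kdiffs_submodule: "submodule (Kprod t s) (Kdiffs t s)" unfolding Kprod_def Kdiffs_def
  by (rule coboundaries_submodule[of "Ktower t s" Suc, OF Ktower_mod Ktower_hom])

lemma Kprod_carrier: "mcarrier (Kprod t s) = {x. \<forall>r. x r \<in> Kim A alpha s r t}"
  unfolding Kprod_def Ktower_def by simp
lemma Kprod_ops: "madd (Kprod t s) x y = (\<lambda>r. madd (A s t) (x r) (y r))"
  "msmult (Kprod t s) c x = (\<lambda>r. msmult (A s t) c (x r))"
  "mdiff (Kprod t s) x y = (\<lambda>r. mdiff (A s t) (x r) (y r))"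
  "mzero (Kprod t s) = (\<lambda>r. mzero (A s t))"
  unfolding Kprod_def Ktower_def by (simp_all add: prodm_mdiff)

lemma Kdiffs_eq: "Kdiffs t s = (\<lambda>c r. mdiff (A s t) (c r) (c (Suc r))) ` mcarrier (Kprod t s)"
  unfolding Kdiffs_def coboundaries_def Kprod_def Ktower_def by simp

lemma Wtower_eq: "Wtower A alpha s t = quot (Kprod t s) (Kdiffs t s)"
  unfolding Wtower_def Rlim_nat_def Kprod_def Kdiffs_def Ktower_def prodn_eq_prodm dn_eq_coboundaries ..

lemma Wobj_eq: "Wobj A alpha t = colim (\<lambda>s. quot (Kprod t s) (Kdiffs t s)) (Wmap t)"
  unfolding Wobj_def Wtower_eq Wmap_def Ktower_def ..

lemma Wtower_mod: "is_mod (quot (Kprod t s) (Kdiffs t s))"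
  by (rule quot_is_mod[OF Kprod_mod Kdiffs_submodule])

lemma alpha_Kim: "x \<in> Kim A alpha (s - 1) r t \<Longrightarrow> alpha s t x \<in> Kim A alpha s r t"
  unfolding Kim_eq kerm_def using alpha_im_pow iota_alpha by auto

lemma alpha_seq_hom: "hom (Kprod t (s - 1)) (Kprod t s) (\<lambda>k r. alpha s t (k r))"
  unfolding hom_def
proof (intro conjI ballI allI)
  have kc: "\<And>k r. k \<in> mcarrier (Kprod t (s - 1)) \<Longrightarrow> k r \<in> mcarrier (A (s - 1) t)"
    unfolding Kprod_carrier using Kim_closed by blast
  fix k l c assume k: "k \<in> mcarrier (Kprod t (s - 1))" and l: "l \<in> mcarrier (Kprod t (s - 1))"
  show "(\<lambda>r. alpha s t (k r)) \<in> mcarrier (Kprod t s)" using k alpha_Kim unfolding Kprod_carrier by simp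
  show "(\<lambda>r. alpha s t (madd (Kprod t (s - 1)) k l r)) =
      madd (Kprod t s) (\<lambda>r. alpha s t (k r)) (\<lambda>r. alpha s t (l r))"
    unfolding Kprod_ops using hom_madd[OF A_mod A_mod alpha_hom kc[OF k] kc[OF l]] by simp
  show "(\<lambda>r. alpha s t (msmult (Kprod t (s - 1)) c k r)) = msmult (Kprod t s) c (\<lambda>r. alpha s t (k r))"
    unfolding Kprod_ops using hom_msmult[OF A_mod A_mod alpha_hom kc[OF k]] by simp
qed

lemma alpha_seq_Kdiffs: "(\<lambda>k r. alpha s t (k r)) ` Kdiffs t (s - 1) \<subseteq> Kdiffs t s"
proof
  fix d assume "d \<in> (\<lambda>k r. alpha s t (k r)) ` Kdiffs t (s - 1)"
  then obtain c where c: "c \<in> mcarrier (Kprod t (s - 1))"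
    and d: "d = (\<lambda>r. alpha s t (mdiff (A (s - 1) t) (c r) (c (Suc r))))"
    unfolding Kdiffs_eq by blast
  have cc: "c r \<in> mcarrier (A (s - 1) t)" for r using c Kim_closed unfolding Kprod_carrier by blast
  have "d = (\<lambda>r. mdiff (A s t) (alpha s t (c r)) (alpha s t (c (Suc r))))"
    unfolding d using hom_mdiff[OF A_mod A_mod alpha_hom cc cc] by simp
  moreover have "(\<lambda>r. alpha s t (c r)) \<in> mcarrier (Kprod t s)" using c alpha_Kim unfolding Kprod_carrier
    by simp
  ultimately show "d \<in> Kdiffs t s" unfolding Kdiffs_eq by (rule image_eqI)
qed

lemma Wmap_eq: "Wmap t s = (\<lambda>X. coset (Kprod t s) (Kdiffs t s) ((\<lambda>k r. alpha s t (k r)) (rep X)))"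
  unfolding Wmap_def Rlim_nat_map_def prodn_eq_prodm dn_eq_coboundaries Kprod_def Kdiffs_def ..

lemma Wmap_coset: "k \<in> mcarrier (Kprod t (s - 1)) \<Longrightarrow>
    Wmap t s (coset (Kprod t (s - 1)) (Kdiffs t (s - 1)) k) = coset (Kprod t s) (Kdiffs t s) (\<lambda>r. alpha s t (k r))"
  unfolding Wmap_eq
  using coset_rep_induced[OF Kprod_mod Kprod_mod Kdiffs_submodule Kdiffs_submodule alpha_seq_hom alpha_seq_Kdiffs]
  by simp

lemma Wmap_hom: "hom (quot (Kprod t (s - 1)) (Kdiffs t (s - 1))) (quot (Kprod t s) (Kdiffs t s)) (Wmap t s)"
  unfolding Wmap_eq
  by (rule hom_quot_induced[OF Kprod_mod Kprod_mod Kdiffs_submodule Kdiffs_submodule alpha_seq_hom alpha_seq_Kdiffs])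

text \<open>The isomorphism \<open>lim F \<cong> W\<close> sends \<open>x\<^sub>0 \<in> F\<^sub>-\<^sub>\<infinity>\<close> to the class of the successive differences of
  lifts \<open>m\<^sub>r \<in> im\<^sup>r A\<^sub>s\<close> of \<open>x\<^sub>0\<close>; these differences lie in \<open>K\<^sub>\<infinity> im\<^sup>r A\<^sub>s\<close>.\<close>
definition is_lift where "is_lift t s x0 m \<longleftrightarrow> (\<forall>r. m r \<in> im_pow t r s \<and> iota A alpha s t (m r) = x0)"
definition succ_diffs where "succ_diffs t s m = (\<lambda>r. mdiff (A s t) (m r) (m (Suc r)))"
definition Finter where "Finter t = {x0. \<forall>s. x0 \<in> Ffilt A alpha s t}"
definition some_lift where "some_lift t s x0 = (\<lambda>r. SOME m. m \<in> im_pow t r s \<and> iota A alpha s t m = x0)"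
definition lift_class where "lift_class t s x0 = coset (Kprod t s) (Kdiffs t s) (succ_diffs t s (some_lift t s x0))"

lemma Finter_closed: "x0 \<in> Finter t \<Longrightarrow> x0 \<in> mcarrier (Ainf A alpha t)"
  unfolding Finter_def using submodule_carrier[OF Ffilt_submodule] by blast

lemma is_lift_some_lift: assumes x0: "x0 \<in> Finter t" shows "is_lift t s x0 (some_lift t s x0)"
  unfolding is_lift_def
proof
  fix r
  have "x0 \<in> Ffilt A alpha (s - int r) t" using x0 unfolding Finter_def by blast
  then obtain u where u: "u \<in> mcarrier (A (s - int r) t)" "x0 = iota A alpha (s - int r) t u"
    unfolding Ffilt_def by blast
  have "apow alpha t r s u \<in> im_pow t r s \<and> iota A alpha s t (apow alpha t r s u) = x0"
    unfolding im_pow_def using u iota_apow by simp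
  hence "\<exists>m. m \<in> im_pow t r s \<and> iota A alpha s t m = x0" by blast
  thus "some_lift t s x0 r \<in> im_pow t r s \<and> iota A alpha s t (some_lift t s x0 r) = x0"
    unfolding some_lift_def by (rule someI_ex)
qed

lemma is_lift_closed: "is_lift t s x0 m \<Longrightarrow> m r \<in> mcarrier (A s t)"
  unfolding is_lift_def using im_pow_closed by blast

lemma succ_diffs_Kprod: assumes v: "is_lift t s x0 m" and x0: "x0 \<in> mcarrier (Ainf A alpha t)"
  shows "succ_diffs t s m \<in> mcarrier (Kprod t s)"
  unfolding Kprod_carrier
proof (intro CollectI allI)
  fix r
  have mc: "m r \<in> mcarrier (A s t)" "m (Suc r) \<in> mcarrier (A s t)" using is_lift_closed[OF v] by auto
  have "iota A alpha s t (mdiff (A s t) (m r) (m (Suc r))) = mzero (Ainf A alpha t)"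
    using iota_mdiff[OF mc] v x0 unfolding is_lift_def by simp
  moreover have "mdiff (A s t) (m r) (m (Suc r)) \<in> im_pow t r s"
    using v unfolding is_lift_def using submodule_mdiff[OF im_pow_submodule] im_pow_Suc_subset by blast
  ultimately show "succ_diffs t s m r \<in> Kim A alpha s r t"
    unfolding succ_diffs_def Kim_eq kerm_def using mc by simp
qed

lemma lift_class_indep: assumes v: "is_lift t s x0 m" and v': "is_lift t s x0 m'" and x0: "x0 \<in> mcarrier (Ainf A alpha t)"
  shows "coset (Kprod t s) (Kdiffs t s) (succ_diffs t s m) = coset (Kprod t s) (Kdiffs t s) (succ_diffs t s m')"
proof -
  define c where "c r = mdiff (A s t) (m r) (m' r)" for r
  have mc: "\<And>r. m r \<in> mcarrier (A s t)" "\<And>r. m' r \<in> mcarrier (A s t)" using is_lift_closed v v' by auto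
  have cK: "c r \<in> Kim A alpha s r t" for r
  proof -
    have "iota A alpha s t (c r) = mzero (Ainf A alpha t)"
      unfolding c_def using iota_mdiff[OF mc(1) mc(2)] v v' x0 unfolding is_lift_def by simp
    moreover have "c r \<in> im_pow t r s" unfolding c_def using v v' unfolding is_lift_def
      using submodule_mdiff[OF im_pow_submodule] by blast
    ultimately show ?thesis unfolding Kim_eq kerm_def c_def using mc by simp
  qed
  have cP: "c \<in> mcarrier (Kprod t s)" unfolding Kprod_carrier using cK by simp
  have "mdiff (Kprod t s) (succ_diffs t s m) (succ_diffs t s m') = (\<lambda>r. mdiff (A s t) (c r) (c (Suc r)))"
    unfolding Kprod_ops succ_diffs_def c_def using mdiff_mdiff_distrib[OF A_mod mc(1) mc(1) mc(2) mc(2)]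
      by simp
  also have "\<dots> \<in> Kdiffs t s" unfolding Kdiffs_eq using cP by (rule image_eqI[rotated]) simp
  finally show ?thesis using coset_eq_iff[OF Kprod_mod Kdiffs_submodule succ_diffs_Kprod[OF v x0] succ_diffs_Kprod[OF v' x0]] by simp
qed

lemma lift_class_eq: "x0 \<in> Finter t \<Longrightarrow> is_lift t s x0 m \<Longrightarrow> lift_class t s x0 = coset (Kprod t s) (Kdiffs t s) (succ_diffs t s m)"
  unfolding lift_class_def using lift_class_indep is_lift_some_lift Finter_closed by blast

lemma iota_im_pow_Ffilt: "m \<in> im_pow t r s \<Longrightarrow> iota A alpha s t m \<in> Ffilt A alpha (s - int r) t"
  unfolding im_pow_def Ffilt_def by (auto simp: iota_apow)

lemma is_lift_Finter: assumes lift: "is_lift t s x0 m" shows "x0 \<in> Finter t"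
  unfolding Finter_def
proof (intro CollectI allI)
  fix s'
  show "x0 \<in> Ffilt A alpha s' t"
  proof (cases "s' \<le> s")
    case True
    have "x0 \<in> Ffilt A alpha (s - int (nat (s - s'))) t"
      using iota_im_pow_Ffilt lift unfolding is_lift_def by metis
    moreover have "s - int (nat (s - s')) = s'" using True by simp
    ultimately show ?thesis by simp
  next
    case False
    have "x0 \<in> Ffilt A alpha s t" using iota_im_pow_Ffilt[of "m 0" t 0 s] lift unfolding is_lift_def
      by simp
    thus ?thesis using Ffilt_mono_le[of s s' t] False by auto
  qed
qed

lemma telescope_is_lift:
  assumes im: "\<And>r. p r \<in> im_pow t r s"
    and ker: "\<And>r. mdiff (A s t) (p r) (p (Suc r)) \<in> kerm (A s t) (Ainf A alpha t) (iota A alpha s t)"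
  shows "is_lift t s (iota A alpha s t (p 0)) p"
proof -
  have pc: "p r \<in> mcarrier (A s t)" for r using im_pow_closed[OF im] .
  have "iota A alpha s t (p (Suc r)) = iota A alpha s t (p r)" for r
    using ker[of r] iota_mdiff[OF pc pc] mdiff_eq_mzero_iff[OF Ainf_mod iota_closed[OF pc] iota_closed[OF pc]]
    unfolding kerm_def by simp
  hence "iota A alpha s t (p r) = iota A alpha s t (p 0)" for r by (induction r) simp_all
  thus ?thesis unfolding is_lift_def using im by simp
qed

lemma is_lift_alpha: assumes v: "is_lift t (s - 1) x0 m" shows "is_lift t s x0 (\<lambda>r. alpha s t (m r))"
  unfolding is_lift_def
proof
  fix r
  have "m r \<in> im_pow t r (s - 1)" "iota A alpha (s - 1) t (m r) = x0" using v unfolding is_lift_def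
    by auto
  thus "alpha s t (m r) \<in> im_pow t r s \<and> iota A alpha s t (alpha s t (m r)) = x0"
    using alpha_im_pow iota_alpha[OF im_pow_closed] by simp
qed

lemma lift_class_closed: "x0 \<in> Finter t \<Longrightarrow> lift_class t s x0 \<in> mcarrier (quot (Kprod t s) (Kdiffs t s))"
  unfolding lift_class_def quot_carrier[OF Kprod_mod Kdiffs_submodule]
    using succ_diffs_Kprod[OF is_lift_some_lift Finter_closed] by blast

lemma Wmap_lift_class: assumes x0: "x0 \<in> Finter t"
  shows "Wmap t s (lift_class t (s - 1) x0) = lift_class t s x0"
proof -
  let ?m = "some_lift t (s - 1) x0"
  have v: "is_lift t (s - 1) x0 ?m" by (rule is_lift_some_lift[OF x0])
  have "Wmap t s (lift_class t (s - 1) x0) = coset (Kprod t s) (Kdiffs t s) (\<lambda>r. alpha s t (succ_diffs t (s - 1) ?m r))"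
    unfolding lift_class_def using Wmap_coset[OF succ_diffs_Kprod[OF v Finter_closed[OF x0]]] .
  also have "(\<lambda>r. alpha s t (succ_diffs t (s - 1) ?m r)) = succ_diffs t s (\<lambda>r. alpha s t (?m r))"
    unfolding succ_diffs_def using hom_mdiff[OF A_mod A_mod alpha_hom is_lift_closed[OF v] is_lift_closed[OF v]] by simp
  also have "coset (Kprod t s) (Kdiffs t s) \<dots> = lift_class t s x0"
    using lift_class_eq[OF x0 is_lift_alpha[OF v]] by simp
  finally show ?thesis .
qed

lemma Wtower_mod': "is_mod ((\<lambda>s. quot (Kprod t s) (Kdiffs t s)) s)" using Wtower_mod by simp
lemma Wmap_hom': "hom ((\<lambda>s. quot (Kprod t s) (Kdiffs t s)) (s - 1)) ((\<lambda>s. quot (Kprod t s) (Kdiffs t s)) s) (Wmap t s)"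
  using Wmap_hom by simp

lemma trans_map_Wmap_lift_class:
  assumes x0: "x0 \<in> Finter t" and "s \<le> u"
    shows "trans_map (Wmap t) u s (lift_class t s x0) = lift_class t u x0"
  using \<open>s \<le> u\<close>
proof (induction u rule: int_ge_induct)
  case (step u)
  hence "trans_map (Wmap t) (u + 1) s (lift_class t s x0) = Wmap t (u + 1) (lift_class t u x0)"
    using trans_map_step[of s u "Wmap t"] by simp
  thus ?case using Wmap_lift_class[OF x0, of "u + 1"] by simp
qed simp

abbreviation Wcls where "Wcls t \<equiv> ccls (\<lambda>s. quot (Kprod t s) (Kdiffs t s)) (Wmap t)"

lemma Wcls_lift_class: assumes x0: "x0 \<in> Finter t"
  shows "Wcls t s (lift_class t s x0) = Wcls t 0 (lift_class t 0 x0)"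
proof -
  define v where "v = max 0 s"
  have "Wcls t s (lift_class t s x0) = Wcls t v (trans_map (Wmap t) v s (lift_class t s x0))"
    using ccls_trans_map_eq[of "\<lambda>s. quot (Kprod t s) (Kdiffs t s)" "Wmap t" s v, OF Wtower_mod' Wmap_hom'] lift_class_closed[OF x0] unfolding v_def by simp
  also have "\<dots> = Wcls t v (lift_class t v x0)" using trans_map_Wmap_lift_class[OF x0] unfolding v_def
    by simp
  also have "\<dots> = Wcls t v (trans_map (Wmap t) v 0 (lift_class t 0 x0))"
    using trans_map_Wmap_lift_class[OF x0] unfolding v_def by simp
  also have "\<dots> = Wcls t 0 (lift_class t 0 x0)"
    using ccls_trans_map_eq[of "\<lambda>s. quot (Kprod t s) (Kdiffs t s)" "Wmap t" 0 v, OF Wtower_mod' Wmap_hom'] lift_class_closed[OF x0] unfolding v_def by simp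
  finally show ?thesis .
qed

abbreviation Flim where "Flim t \<equiv> lim_int (\<lambda>s. sub (Ainf A alpha t) (Ffilt A alpha s t)) (\<lambda>s. id)"

lemma Flim_carrier: "x \<in> mcarrier (Flim t) \<longleftrightarrow> (\<forall>s. x s \<in> Ffilt A alpha s t) \<and> (\<forall>s. x (s - 1) = x s)"
  unfolding lim_int_def prodz_eq_prodm by simp
lemma Flim_ops: "madd (Flim t) x y = (\<lambda>s. madd (Ainf A alpha t) (x s) (y s))"
  "msmult (Flim t) r x = (\<lambda>s. msmult (Ainf A alpha t) r (x s))"
  unfolding lim_int_def prodz_eq_prodm by simp_all

lemma Flim_const: assumes "x \<in> mcarrier (Flim t)" shows "x s = x 0" "x 0 \<in> Finter t"
proof -
  have a: "\<forall>s. x s \<in> Ffilt A alpha s t" "\<forall>s. x (s - 1) = x s" using assms unfolding Flim_carrier by auto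
  show c: "x s = x 0" for s by (rule int_seq_const[OF a(2)])
  show "x 0 \<in> Finter t" unfolding Finter_def
  proof (intro CollectI allI)
    fix s show "x 0 \<in> Ffilt A alpha s t" using a(1) c[of s] by metis
  qed
qed

definition Flim_to_W where "Flim_to_W t x = Wcls t 0 (lift_class t 0 (x 0))"

lemma Wobj_carrier: "mcarrier (Wobj A alpha t) = {Wcls t s X | s X. X \<in> mcarrier (quot (Kprod t s) (Kdiffs t s))}"
  unfolding Wobj_eq using colim_carrier[of "\<lambda>s. quot (Kprod t s) (Kdiffs t s)" "Wmap t", OF Wtower_mod' Wmap_hom'] by simp

lemma Wobj_madd: "X \<in> mcarrier (quot (Kprod t v) (Kdiffs t v)) \<Longrightarrow> Y \<in> mcarrier (quot (Kprod t v) (Kdiffs t v)) \<Longrightarrow>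
  madd (Wobj A alpha t) (Wcls t v X) (Wcls t v Y) = Wcls t v (madd (quot (Kprod t v) (Kdiffs t v)) X Y)"
  unfolding Wobj_eq using colim_madd_same[of "\<lambda>s. quot (Kprod t s) (Kdiffs t s)" "Wmap t", OF Wtower_mod' Wmap_hom'] by simp
lemma Wobj_msmult: "X \<in> mcarrier (quot (Kprod t v) (Kdiffs t v)) \<Longrightarrow>
  msmult (Wobj A alpha t) r (Wcls t v X) = Wcls t v (msmult (quot (Kprod t v) (Kdiffs t v)) r X)"
  unfolding Wobj_eq using colim_msmult[of "\<lambda>s. quot (Kprod t s) (Kdiffs t s)" "Wmap t", OF Wtower_mod' Wmap_hom'] by simp

lemma Finter_madd: "x0 \<in> Finter t \<Longrightarrow> y0 \<in> Finter t \<Longrightarrow> madd (Ainf A alpha t) x0 y0 \<in> Finter t"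
  unfolding Finter_def using submodule_madd[OF Ffilt_submodule] by blast
lemma Finter_msmult: "x0 \<in> Finter t \<Longrightarrow> msmult (Ainf A alpha t) r x0 \<in> Finter t"
  unfolding Finter_def using submodule_msmult[OF Ffilt_submodule] by blast

lemma lift_class_madd: assumes x0: "x0 \<in> Finter t" and y0: "y0 \<in> Finter t"
  shows "lift_class t s (madd (Ainf A alpha t) x0 y0) = madd (quot (Kprod t s) (Kdiffs t s)) (lift_class t s x0) (lift_class t s y0)"
proof -
  let ?lx = "some_lift t s x0" and ?ly = "some_lift t s y0"
  have vx: "is_lift t s x0 ?lx" and vy: "is_lift t s y0 ?ly" using is_lift_some_lift x0 y0 by auto
  have v: "is_lift t s (madd (Ainf A alpha t) x0 y0) (\<lambda>r. madd (A s t) (?lx r) (?ly r))"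
    unfolding is_lift_def
  proof
    fix r
    have "?lx r \<in> im_pow t r s" "?ly r \<in> im_pow t r s" "iota A alpha s t (?lx r) = x0" "iota A alpha s t (?ly r) = y0"
      using vx vy unfolding is_lift_def by auto
    thus "madd (A s t) (?lx r) (?ly r) \<in> im_pow t r s \<and> iota A alpha s t (madd (A s t) (?lx r) (?ly r)) = madd (Ainf A alpha t) x0 y0"
      using submodule_madd[OF im_pow_submodule] iota_madd[OF im_pow_closed im_pow_closed] by simp
  qed
  have "succ_diffs t s (\<lambda>r. madd (A s t) (?lx r) (?ly r)) = madd (Kprod t s) (succ_diffs t s ?lx) (succ_diffs t s ?ly)"
    unfolding succ_diffs_def Kprod_ops
      using mdiff_madd_distrib[OF A_mod is_lift_closed[OF vx] is_lift_closed[OF vy] is_lift_closed[OF vx] is_lift_closed[OF vy]] by simp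
  hence "lift_class t s (madd (Ainf A alpha t) x0 y0) = coset (Kprod t s) (Kdiffs t s) (madd (Kprod t s) (succ_diffs t s ?lx) (succ_diffs t s ?ly))"
    using lift_class_eq[OF Finter_madd[OF x0 y0] v] by simp
  also have "\<dots> = madd (quot (Kprod t s) (Kdiffs t s)) (lift_class t s x0) (lift_class t s y0)"
    unfolding lift_class_def using quot_madd[OF Kprod_mod Kdiffs_submodule succ_diffs_Kprod[OF vx Finter_closed[OF x0]] succ_diffs_Kprod[OF vy Finter_closed[OF y0]]] by simp
  finally show ?thesis .
qed

lemma lift_class_msmult: assumes x0: "x0 \<in> Finter t"
  shows "lift_class t s (msmult (Ainf A alpha t) c x0) = msmult (quot (Kprod t s) (Kdiffs t s)) c (lift_class t s x0)"
proof -
  let ?lx = "some_lift t s x0"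
  have vx: "is_lift t s x0 ?lx" using is_lift_some_lift x0 by auto
  have v: "is_lift t s (msmult (Ainf A alpha t) c x0) (\<lambda>r. msmult (A s t) c (?lx r))"
    unfolding is_lift_def
  proof
    fix r
    have "?lx r \<in> im_pow t r s" "iota A alpha s t (?lx r) = x0" using vx unfolding is_lift_def by auto
    thus "msmult (A s t) c (?lx r) \<in> im_pow t r s \<and> iota A alpha s t (msmult (A s t) c (?lx r)) = msmult (Ainf A alpha t) c x0"
      using submodule_msmult[OF im_pow_submodule] iota_msmult[OF im_pow_closed] by simp
  qed
  have "succ_diffs t s (\<lambda>r. msmult (A s t) c (?lx r)) = msmult (Kprod t s) c (succ_diffs t s ?lx)"
    unfolding succ_diffs_def Kprod_ops
      using mdiff_msmult_distrib[OF A_mod is_lift_closed[OF vx] is_lift_closed[OF vx]] by simp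
  hence "lift_class t s (msmult (Ainf A alpha t) c x0) = coset (Kprod t s) (Kdiffs t s) (msmult (Kprod t s) c (succ_diffs t s ?lx))"
    using lift_class_eq[OF Finter_msmult[OF x0] v] by simp
  also have "\<dots> = msmult (quot (Kprod t s) (Kdiffs t s)) c (lift_class t s x0)"
    unfolding lift_class_def using quot_msmult[OF Kprod_mod Kdiffs_submodule succ_diffs_Kprod[OF vx Finter_closed[OF x0]]] by simp
  finally show ?thesis .
qed

lemma Flim_to_W_hom: "hom (Flim t) (Wobj A alpha t) (Flim_to_W t)"
  unfolding hom_def
proof (intro conjI ballI allI)
  fix x assume x: "x \<in> mcarrier (Flim t)"
  show "Flim_to_W t x \<in> mcarrier (Wobj A alpha t)" unfolding Flim_to_W_def Wobj_carrier
    using lift_class_closed[OF Flim_const(2)[OF x]] by blast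
next
  fix x y assume x: "x \<in> mcarrier (Flim t)" and y: "y \<in> mcarrier (Flim t)"
  show "Flim_to_W t (madd (Flim t) x y) = madd (Wobj A alpha t) (Flim_to_W t x) (Flim_to_W t y)"
    unfolding Flim_to_W_def Flim_ops using lift_class_madd[OF Flim_const(2)[OF x] Flim_const(2)[OF y]]
      Wobj_madd[OF lift_class_closed[OF Flim_const(2)[OF x]] lift_class_closed[OF Flim_const(2)[OF y]]]
        by simp
next
  fix r x assume x: "x \<in> mcarrier (Flim t)"
  show "Flim_to_W t (msmult (Flim t) r x) = msmult (Wobj A alpha t) r (Flim_to_W t x)"
    unfolding Flim_to_W_def Flim_ops
      using lift_class_msmult[OF Flim_const(2)[OF x]] Wobj_msmult[OF lift_class_closed[OF Flim_const(2)[OF x]]] by simp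
qed

end

locale convergent_exact_couple = exact_couple_setting +
  assumes cc_lim: "\<forall>t. trivial_mod (lim_int (\<lambda>s. A s t) (\<lambda>s. alpha s t))"
    and cc_Rlim: "\<forall>t. trivial_mod (Rlim_int (\<lambda>s. A s t) (\<lambda>s. alpha s t))"
    and RE: "\<forall>s t. trivial_mod (REinf A E alpha gamma dg s t)"
begin

lemma Zr_seq_telescope:
  assumes e: "\<And>n. e n \<in> Zr A E alpha gamma dg (Suc n) q (t - dg)"
  obtains c where "\<And>n. c n \<in> Zr A E alpha gamma dg (Suc n) q (t - dg)"
    and "\<And>n. e n = mdiff (E q (t - dg)) (c n) (c (Suc n))"
proof -
  define X where "X = (\<lambda>n. sub (E q (t - dg)) (Zr A E alpha gamma dg (n + 1) q (t - dg)))"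
  have mX: "\<And>n. is_mod (X n)" unfolding X_def using is_mod_sub[OF E_mod Zr_submodule] by simp
  have shrink: "Zr A E alpha gamma dg (Suc (Suc n)) q (t - dg) \<subseteq> Zr A E alpha gamma dg (Suc n) q (t - dg)" for n
    unfolding Zr_Suc using im_pow_Suc_subset by auto
  have hX: "\<And>n. hom (X (Suc n)) (X n) id" unfolding X_def using hom_id_sub[OF shrink] by simp
  have "trivial_mod (Rlim_nat X (\<lambda>n. id))" using RE unfolding REinf_def X_def by simp
  from Rlim_nat_trivialD[OF mX hX this, of e] e that show ?thesis unfolding X_def by auto
qed

text \<open>Two lifts of \<open>z\<close> differ by an element of \<open>ker \<alpha> = \<gamma> Z\<^sup>r\<close>; as \<open>RE\<^sup>\<infinity> = 0\<close>, the \<open>\<gamma>\<close>-images of a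
  telescoping sequence of \<open>Z\<^sup>r\<close> correct a sequence of lifts into a constant one.\<close>
lemma im_inf_lift: assumes z: "z \<in> im_inf t q" shows "\<exists>y \<in> im_inf t (q - 1). alpha q t y = z"
proof -
  obtain v where vim: "\<And>r. v r \<in> im_pow t r (q - 1)" and av: "\<And>r. alpha q t (v r) = z"
    using im_inf_lift_seq[OF z] by metis
  have vc: "v r \<in> mcarrier (A (q - 1) t)" for r using im_pow_closed[OF vim] .
  have zc: "z \<in> mcarrier (A q t)" using im_inf_closed[OF z] .
  define w where "w r = mdiff (A (q - 1) t) (v r) (v (Suc r))" for r
  have wc: "w r \<in> mcarrier (A (q - 1) t)" for r unfolding w_def using vc by simp
  have "\<forall>r. \<exists>e. e \<in> Zr A E alpha gamma dg (Suc r) q (t - dg) \<and> gamma q (t - dg) e = w r"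
  proof
    fix r
    have "w r \<in> kerm (A (q - 1) t) (A q t) (alpha q t)"
      unfolding w_def kerm_def using vc hom_mdiff[OF A_mod A_mod alpha_hom vc vc] av zc by simp
    moreover have "w r \<in> im_pow t r (q - 1)"
      unfolding w_def using submodule_mdiff[OF im_pow_submodule vim im_pow_Suc_subset[OF vim]] .
    ultimately show "\<exists>e. e \<in> Zr A E alpha gamma dg (Suc r) q (t - dg) \<and> gamma q (t - dg) e = w r"
      using kerm_alpha_im_pow_gamma by metis
  qed
  then obtain e where eZ: "\<And>r. e r \<in> Zr A E alpha gamma dg (Suc r) q (t - dg)"
    and ge: "\<And>r. gamma q (t - dg) (e r) = w r" by metis
  obtain c where c: "\<And>n. c n \<in> Zr A E alpha gamma dg (Suc n) q (t - dg)"
    "\<And>n. e n = mdiff (E q (t - dg)) (c n) (c (Suc n))"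
    using Zr_seq_telescope[OF eZ] by metis
  have cc: "c n \<in> mcarrier (E q (t - dg))" "gamma q (t - dg) (c n) \<in> im_pow t n (q - 1)" for n
    using c(1)[of n] unfolding Zr_Suc by auto
  have gc: "gamma q (t - dg) (c n) \<in> mcarrier (A (q - 1) t)" for n
    using hom_closed[OF E_mod A_mod gamma_hom' cc(1)] .
  have gk: "alpha q t (gamma q (t - dg) (c n)) = mzero (A q t)" for n
    using exact_gamma_alpha'[of q t] cc(1)[of n] unfolding kerm_def by blast
  define y where "y r = mdiff (A (q - 1) t) (v r) (gamma q (t - dg) (c r))" for r
  have yc: "y r \<in> mcarrier (A (q - 1) t)" for r unfolding y_def using vc gc by simp
  have "y (Suc r) = y r" for r
  proof -
    have "mdiff (A (q - 1) t) (y r) (y (Suc r)) =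
      mdiff (A (q - 1) t) (w r) (mdiff (A (q - 1) t) (gamma q (t - dg) (c r)) (gamma q (t - dg) (c (Suc r))))"
      unfolding y_def w_def using mdiff_mdiff_distrib[OF A_mod vc vc gc gc] by simp
    also have "\<dots> = mdiff (A (q - 1) t) (w r) (gamma q (t - dg) (e r))"
      using c(2)[of r] hom_mdiff[OF E_mod A_mod gamma_hom' cc(1) cc(1)] by simp
    also have "\<dots> = mzero (A (q - 1) t)" using ge wc by simp
    finally show ?thesis using mdiff_eq_mzero_iff[OF A_mod yc yc] by simp
  qed
  moreover have "y r \<in> im_pow t r (q - 1)" for r
    unfolding y_def by (rule submodule_mdiff[OF im_pow_submodule vim cc(2)])
  ultimately have "y 0 \<in> im_inf t (q - 1)" by (rule im_inf_of_const_seq)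
  moreover have "alpha q t (y 0) = z"
    unfolding y_def using hom_mdiff[OF A_mod A_mod alpha_hom vc gc] av gk zc
      by (simp add: mdiff_conv_madd)
  ultimately show ?thesis by blast
qed

lemma im_inf_backward_chain:
  assumes z: "z \<in> im_inf t q"
  obtains W where "W 0 = z" and "\<And>k. W k \<in> im_inf t (q - int k)"
    and "\<And>k. alpha (q - int k) t (W (Suc k)) = W k"
proof -
  have "\<exists>W. \<forall>k. (W k \<in> im_inf t (q - int k) \<and> (k = 0 \<longrightarrow> W k = z)) \<and> alpha (q - int k) t (W (Suc k)) = W k"
  proof (rule dependent_nat_choice)
    show "\<exists>x. x \<in> im_inf t (q - int 0) \<and> (0 = (0::nat) \<longrightarrow> x = z)" using z by auto
    fix x k assume "x \<in> im_inf t (q - int k) \<and> (k = 0 \<longrightarrow> x = z)"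
    then obtain y where "y \<in> im_inf t (q - int k - 1)" "alpha (q - int k) t y = x" using im_inf_lift
      by blast
    thus "\<exists>y. (y \<in> im_inf t (q - int (Suc k)) \<and> (Suc k = 0 \<longrightarrow> y = z)) \<and> alpha (q - int k) t y = x"
      by auto
  qed
  thus thesis using that by blast
qed

lemma im_inf_eq_mzero: assumes z: "z \<in> im_inf t q" shows "z = mzero (A q t)"
proof -
  obtain W where W: "W 0 = z" "\<And>k. W k \<in> im_inf t (q - int k)" "\<And>k. alpha (q - int k) t (W (Suc k)) = W k"
    using im_inf_backward_chain[OF z] by metis
  obtain x where "\<And>s. x s \<in> mcarrier (A s t)" "\<And>s. alpha s t (x (s - 1)) = x s" "x q = W 0"
    using backward_chain_extends[of W q t] im_inf_closed[OF W(2)] W(3) by metis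
  thus ?thesis using lim_int_trivial_imp_zero[OF cc_lim[rule_format]] W(1) by metis
qed

lemma filtration_complete: "trivial_mod (Rlim_int (\<lambda>s. sub (Ainf A alpha t) (Ffilt A alpha s t)) (\<lambda>s. id))"
proof (rule Rlim_int_trivial_surj[OF A_mod alpha_hom _ _ _ _ _ cc_Rlim[rule_format]])
  show "is_mod (sub (Ainf A alpha t) (Ffilt A alpha s t))" for s
    by (rule is_mod_sub[OF Ainf_mod Ffilt_submodule])
  show "hom (sub (Ainf A alpha t) (Ffilt A alpha (s - 1) t)) (sub (Ainf A alpha t) (Ffilt A alpha s t)) id" for s
    using hom_id_sub[OF Ffilt_mono] .
  show "hom (A s t) (sub (Ainf A alpha t) (Ffilt A alpha s t)) (iota A alpha s t)" for s
    using iota_hom unfolding hom_def Ffilt_def by simp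
qed (simp_all add: Ffilt_def iota_alpha)

lemma Zinf_eq_image_beta: "Zinf A E alpha gamma dg s (t + db) = beta s t ` mcarrier (A s t)"
proof -
  have "mzero (A (s - 1) (t + db + dg)) \<in> im_inf (t + db + dg) (s - 1)"
    unfolding im_inf_def using submodule_zero[OF im_pow_submodule] by simp
  hence "gamma s (t + db) x \<in> im_inf (t + db + dg) (s - 1) \<longleftrightarrow> gamma s (t + db) x = mzero (A (s - 1) (t + db + dg))"
    for x using im_inf_eq_mzero by metis
  thus ?thesis unfolding Zinf_eq_gamma_im_inf exact_beta_gamma kerm_def by simp
qed

lemma Einf_iso_filtration_quotient: "iso (Einf A E alpha beta gamma db dg s (t + db))
                   (quot (sub (Ainf A alpha t) (Ffilt A alpha s t)) (Ffilt A alpha (s - 1) t))"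
  unfolding Einf_def Zinf_eq_image_beta Binf_eq_image_beta_kerm Ffilt_pred_eq Ffilt_def[of A alpha s t]
    using iso_image_quot[OF A_mod E_mod Ainf_mod beta_hom iota_hom] .

text \<open>If the classes agree, the difference of the two lifts, corrected by an element of \<open>Kprod\<close>,
  is constant and lies in \<open>im\<^sup>\<infinity> A\<^sub>u = 0\<close>.\<close>
lemma lift_class_inj:
  assumes x0: "x0 \<in> Finter t" and y0: "y0 \<in> Finter t" and e: "lift_class t u x0 = lift_class t u y0"
  shows "x0 = y0"
proof -
  let ?lx = "some_lift t u x0" and ?ly = "some_lift t u y0"
  have vx: "is_lift t u x0 ?lx" and vy: "is_lift t u y0 ?ly" using is_lift_some_lift x0 y0 by auto
  have lc: "\<And>r. ?lx r \<in> mcarrier (A u t)" "\<And>r. ?ly r \<in> mcarrier (A u t)" using is_lift_closed vx vy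
    by auto
  have "mdiff (Kprod t u) (succ_diffs t u ?lx) (succ_diffs t u ?ly) \<in> Kdiffs t u"
    using e coset_eq_iff[OF Kprod_mod Kdiffs_submodule succ_diffs_Kprod[OF vx Finter_closed[OF x0]]
        succ_diffs_Kprod[OF vy Finter_closed[OF y0]]]
    unfolding lift_class_def by simp
  then obtain c where c: "c \<in> mcarrier (Kprod t u)"
    "mdiff (Kprod t u) (succ_diffs t u ?lx) (succ_diffs t u ?ly) = (\<lambda>r. mdiff (A u t) (c r) (c (Suc r)))"
    unfolding Kdiffs_eq by blast
  have cK: "\<And>r. c r \<in> Kim A alpha u r t" using c(1) unfolding Kprod_carrier by simp
  have cc: "\<And>r. c r \<in> mcarrier (A u t)" by (rule Kim_closed[OF cK])
  define n where "n r = mdiff (A u t) (mdiff (A u t) (?lx r) (?ly r)) (c r)" for r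
  have nc: "n r \<in> mcarrier (A u t)" for r unfolding n_def using lc cc by simp
  have "n (Suc r) = n r" for r
  proof -
    have "mdiff (A u t) (n r) (n (Suc r)) = mdiff (A u t)
        (mdiff (A u t) (succ_diffs t u ?lx r) (succ_diffs t u ?ly r)) (mdiff (A u t) (c r) (c (Suc r)))"
      unfolding n_def succ_diffs_def
      using mdiff_mdiff_distrib[OF A_mod mdiff_closed[OF A_mod lc(1) lc(2)] cc mdiff_closed[OF A_mod lc(1) lc(2)] cc]
        mdiff_mdiff_distrib[OF A_mod lc(1) lc(2) lc(1) lc(2)] by simp
    also have "\<dots> = mzero (A u t)" using fun_cong[OF c(2), of r] cc unfolding Kprod_ops by simp
    finally show ?thesis using mdiff_eq_mzero_iff[OF A_mod nc nc] by simp
  qed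
  moreover have "n r \<in> im_pow t r u" for r
  proof -
    have "?lx r \<in> im_pow t r u" "?ly r \<in> im_pow t r u" "c r \<in> im_pow t r u"
      using vx vy cK unfolding is_lift_def Kim_eq by auto
    thus ?thesis unfolding n_def
      by (intro submodule_mdiff[OF im_pow_submodule] submodule_mdiff[OF im_pow_submodule])
  qed
  ultimately have n0: "n 0 = mzero (A u t)" by (intro im_inf_eq_mzero im_inf_of_const_seq)
  have "iota A alpha u t (n 0) = mdiff (Ainf A alpha t) (mdiff (Ainf A alpha t) x0 y0) (mzero (Ainf A alpha t))"
    unfolding n_def using iota_mdiff[OF mdiff_closed[OF A_mod lc(1) lc(2)] cc] iota_mdiff[OF lc(1) lc(2)] vx vy cK
    unfolding is_lift_def Kim_eq kerm_def by simp
  hence "mdiff (Ainf A alpha t) x0 y0 = mzero (Ainf A alpha t)"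
    using n0 Finter_closed[OF x0] Finter_closed[OF y0] by simp
  thus ?thesis using mdiff_eq_mzero_iff[OF Ainf_mod Finter_closed[OF x0] Finter_closed[OF y0]] by simp
qed

lemma Flim_to_W_inj: "inj_on (Flim_to_W t) (mcarrier (Flim t))"
proof (rule inj_onI)
  fix x y assume x: "x \<in> mcarrier (Flim t)" and y: "y \<in> mcarrier (Flim t)" and e: "Flim_to_W t x = Flim_to_W t y"
  have x0: "x 0 \<in> Finter t" by (rule Flim_const(2)[OF x])
  have y0: "y 0 \<in> Finter t" by (rule Flim_const(2)[OF y])
  have e': "Wcls t 0 (lift_class t 0 (x 0)) = Wcls t 0 (lift_class t 0 (y 0))" using e
    unfolding Flim_to_W_def .
  have "colim_rel (Wmap t) 0 (lift_class t 0 (x 0)) 0 (lift_class t 0 (y 0))"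
    using e' ccls_eq_iff[of "\<lambda>s. quot (Kprod t s) (Kdiffs t s)" "Wmap t", OF Wtower_mod' Wmap_hom'
        lift_class_closed[OF x0] lift_class_closed[OF y0]] by simp
  then obtain u where u: "u \<ge> 0"
    "trans_map (Wmap t) u 0 (lift_class t 0 (x 0)) = trans_map (Wmap t) u 0 (lift_class t 0 (y 0))"
    unfolding colim_rel_def by blast
  hence "lift_class t u (x 0) = lift_class t u (y 0)"
    using trans_map_Wmap_lift_class[OF x0 u(1)] trans_map_Wmap_lift_class[OF y0 u(1)] by simp
  hence "x 0 = y 0" by (rule lift_class_inj[OF x0 y0])
  show "x = y"
  proof
    fix s show "x s = y s" using Flim_const(1)[OF x, of s] Flim_const(1)[OF y, of s] \<open>x 0 = y 0\<close> by simp
  qed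
qed

text \<open>Write \<open>k\<^sub>r = \<alpha>\<^sup>r u\<^sub>r\<close>; since \<open>Rlim A = 0\<close>, the sequence \<open>(u\<^sub>r)\<close>, placed in \<open>A\<^sub>s\<^sub>-\<^sub>r\<close>, is \<open>c - \<alpha> c\<close>,
  and \<open>p\<^sub>r = \<alpha>\<^sup>r c\<^sub>s\<^sub>-\<^sub>r\<close> works.\<close>
lemma im_pow_seq_telescope:
  assumes k: "\<And>r. k r \<in> im_pow t r s"
  obtains p where "\<And>r. p r \<in> im_pow t r s" and "\<And>r. mdiff (A s t) (p r) (p (Suc r)) = k r"
proof -
  have "\<forall>r. \<exists>v. v \<in> mcarrier (A (s - int r) t) \<and> apow alpha t r s v = k r"
  proof
    fix r show "\<exists>v. v \<in> mcarrier (A (s - int r) t) \<and> apow alpha t r s v = k r"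
      using k[of r] unfolding im_pow_def by auto
  qed
  then obtain u where u: "\<And>r. u r \<in> mcarrier (A (s - int r) t)" "\<And>r. apow alpha t r s (u r) = k r"
    by metis
  define b where "b s' = (if s' \<le> s then u (nat (s - s')) else mzero (A s' t))" for s'
  have bc: "b s' \<in> mcarrier (A s' t)" for s'
  proof (cases "s' \<le> s")
    case True
    hence e: "s - int (nat (s - s')) = s'" by simp
    show ?thesis unfolding b_def using True u(1)[of "nat (s - s')"] unfolding e by simp
  next
    case False thus ?thesis unfolding b_def by simp
  qed
  obtain c where c: "\<And>s'. c s' \<in> mcarrier (A s' t)" "\<And>s'. b s' = mdiff (A s' t) (c s') (alpha s' t (c (s' - 1)))"
    using Rlim_int_trivialD[OF A_mod alpha_hom cc_Rlim[rule_format] bc] by metis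
  define p where "p r = apow alpha t r s (c (s - int r))" for r
  show thesis
  proof (rule that)
    show "p r \<in> im_pow t r s" for r unfolding p_def im_pow_def using c(1) by simp
    fix r
    have ac: "alpha (s - int r) t (c (s - 1 - int r)) \<in> mcarrier (A (s - int r) t)"
      using alpha_closed[of "c (s - 1 - int r)" "s - int r" t] c(1) by simp
    have "p (Suc r) = apow alpha t r s (alpha (s - int r) t (c (s - 1 - int r)))"
      unfolding p_def using fpow_Suc_right_apply[of "\<lambda>s. alpha s t" r s] by simp
    hence "mdiff (A s t) (p r) (p (Suc r)) =
        apow alpha t r s (mdiff (A (s - int r) t) (c (s - int r)) (alpha (s - int r) t (c (s - 1 - int r))))"
      unfolding p_def using hom_mdiff[OF A_mod A_mod apow_hom c(1) ac] by simp
    also have "\<dots> = apow alpha t r s (u r)" using c(2)[of "s - int r"] unfolding b_def by simp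
    finally show "mdiff (A s t) (p r) (p (Suc r)) = k r" using u(2) by simp
  qed
qed

lemma Flim_to_W_surj:
  assumes w: "w \<in> mcarrier (Wobj A alpha t)" shows "\<exists>x \<in> mcarrier (Flim t). Flim_to_W t x = w"
proof -
  obtain s X where X: "X \<in> mcarrier (quot (Kprod t s) (Kdiffs t s))" "w = Wcls t s X"
    using w unfolding Wobj_carrier by blast
  obtain k where k: "k \<in> mcarrier (Kprod t s)" "X = coset (Kprod t s) (Kdiffs t s) k"
    using X(1) unfolding quot_carrier[OF Kprod_mod Kdiffs_submodule] by blast
  have kK: "\<And>r. k r \<in> Kim A alpha s r t" using k(1) unfolding Kprod_carrier by simp
  obtain p where pim: "\<And>r. p r \<in> im_pow t r s" and pdiff: "\<And>r. mdiff (A s t) (p r) (p (Suc r)) = k r"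
    using im_pow_seq_telescope[of k t s] kK unfolding Kim_eq by blast
  define x0 where "x0 = iota A alpha s t (p 0)"
  have v: "is_lift t s x0 p" unfolding x0_def using telescope_is_lift[OF pim] kK pdiff unfolding Kim_eq
    by simp
  have x0F: "x0 \<in> Finter t" by (rule is_lift_Finter[OF v])
  have "succ_diffs t s p = k" unfolding succ_diffs_def using pdiff by (simp add: fun_eq_iff)
  hence "lift_class t s x0 = X" using lift_class_eq[OF x0F v] k(2) by simp
  hence "Flim_to_W t (\<lambda>_. x0) = w" unfolding Flim_to_W_def using Wcls_lift_class[OF x0F, of s] X(2)
    by simp
  moreover have "(\<lambda>_. x0) \<in> mcarrier (Flim t)" unfolding Flim_carrier using x0F unfolding Finter_def
    by simp
  ultimately show ?thesis by blast
qed

lemma Flim_iso_Wobj: "iso (Flim t) (Wobj A alpha t)"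
proof -
  have "Flim_to_W t ` mcarrier (Flim t) = mcarrier (Wobj A alpha t)"
  proof
    show "Flim_to_W t ` mcarrier (Flim t) \<subseteq> mcarrier (Wobj A alpha t)"
      using Flim_to_W_hom unfolding hom_def by blast
    show "mcarrier (Wobj A alpha t) \<subseteq> Flim_to_W t ` mcarrier (Flim t)" using Flim_to_W_surj by blast
  qed
  thus ?thesis unfolding iso_def bij_betw_def using Flim_to_W_hom Flim_to_W_inj by blast
qed

end

theorem theorem3p8:
  fixes A :: "int \<Rightarrow> int \<Rightarrow> ('r::ring_1, 'a) rmod"
    and E :: "int \<Rightarrow> int \<Rightarrow> ('r, 'e) rmod"
    and alpha :: "int \<Rightarrow> int \<Rightarrow> 'a \<Rightarrow> 'a"
    and beta :: "int \<Rightarrow> int \<Rightarrow> 'a \<Rightarrow> 'e"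
    and gamma :: "int \<Rightarrow> int \<Rightarrow> 'e \<Rightarrow> 'a"
    and db dg :: int
  assumes ec: "exact_couple A E alpha beta gamma db dg"
    and cc_lim: "\<forall>t. trivial_mod (lim_int (\<lambda>s. A s t) (\<lambda>s. alpha s t))"
    and cc_Rlim: "\<forall>t. trivial_mod (Rlim_int (\<lambda>s. A s t) (\<lambda>s. alpha s t))"
    and RE: "\<forall>s t. trivial_mod (REinf A E alpha gamma dg s t)"
  shows "(\<forall>t. (\<Union>s. Ffilt A alpha s t) = mcarrier (Ainf A alpha t))
       \<and> (\<forall>s t. iso (Einf A E alpha beta gamma db dg s (t + db))
                   (quot (sub (Ainf A alpha t) (Ffilt A alpha s t)) (Ffilt A alpha (s - 1) t)))
       \<and> (\<forall>t. trivial_mod (Rlim_int (\<lambda>s. sub (Ainf A alpha t) (Ffilt A alpha s t)) (\<lambda>s. id)))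
       \<and> (\<forall>t. iso (lim_int (\<lambda>s. sub (Ainf A alpha t) (Ffilt A alpha s t)) (\<lambda>s. id))
                 (Wobj A alpha t))"
proof -
  interpret convergent_exact_couple A E alpha beta gamma db dg
    using ec cc_lim cc_Rlim RE by unfold_locales
  show ?thesis using filtration_exhaustive Einf_iso_filtration_quotient filtration_complete Flim_iso_Wobj
    by blast
qed

end
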